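(* Let $\xi$ be an American option and let $\mathcal{Z}^{\mathrm{ad}}_0\subseteq\mathbb{R}^d$ be given by the construction in the context. Then \[ \mathcal{Z}^{\mathrm{ad}}_0=\{x\in\mathbb{R}^d:\exists Y\in\Phi^{\mathrm{ag}}(\xi),\ x=Y_0\}, \] and for each $j=1,\ldots,d$ the ask price satisfies $\pi^{\mathrm{ag}}_j(\xi)=\min\{x\in\mathbb{R}: xe^j\in\mathcal{Z}^{\mathrm{ad}}_0\}$ (the minimum being attained). Moreover, there exists $Y\in\Phi^{\mathrm{ag}}(\xi)$ with $Y_0=\pi^{\mathrm{ag}}_j(\xi)e^j$.
   Context: Finite filtered probability space $(\Omega,\mathcal{F},\mathbb{P};(\mathcal{F}_t)_{t=0}^T)$, $\mathcal{F}_0$ trivial, $\mathcal{F}_T=2^\Omega$, $\mathbb{P}(\{\omega\})>0$. $\Omega_t$: atoms (nodes) of $\mathcal{F}_t$; for $\mu\in\Omega_t$, $t<T$, $\mathrm{succ}\,\mu=\{\nu\in\Omega_{t+1}:\nu\subseteq\mu\}$. $\mathcal{L}_t$: $\mathcal{F}_t$-measurable $\mathbb{R}^d$-valued random variables (functions on $\Omega_t$). $d$ assets with $\mathcal{F}_t$-measurable exchange rates $\pi^{jk}_t>0$, $\pi^{jj}_t=1$. For $\mu\in\Omega_t$, $\mathcal{K}^\mu_t$ is the convex cone generated by $e^1,\ldots,e^d$ and $\pi^{jk}_t(\mu)e^j-e^k$, and $\mathcal{K}_t=\{x\in\mathcal{L}_t:x(\mu)\in\mathcal{K}^\mu_t\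 \forall\mu\}$. Deferred solvency cone $\mathcal{Q}_t$: set of $z\in\mathcal{L}_t$ for which there are $y_{t+1},\ldots,y_{T+1}$, $y_s\in\mathcal{L}_{s-1}$, $y_{T+1}=0$, with $z-y_{t+1}\in\mathcal{K}_t$, $y_s-y_{s+1}\in\mathcal{K}_s$ ($s=t+1,\ldots,T$); $\mathcal{Q}^\mu_t=\{z(\mu):z\in\mathcal{Q}_t\}$. Trading strategies $\Phi$: $y=(y_t)_{t=0}^{T+1}$, $y_0\in\mathbb{R}^d$, $y_t\in\mathcal{L}_{t-1}$, $y_{T+1}=0$. Mixed stopping times $\mathcal{X}$: adapted $[0,1]$-valued $\chi$ with $\sum_t\chi_t=1$. American option: adapted $\mathbb{R}^d$-valued $\xi=(\xi_t)_{t=0}^T$. $\Phi^{\mathrm{ag}}(\xi)$: maps $Y:\mathcal{X}\to\Phi$ with $Y^\chi_t-\chi_t\xi_t-Y^\chi_{t+1}\in\mathcal{K}_t$ for all $\chi$, $t=0,\ldots,T$, and non-anticipating: $\chi_s(\omega)=\chi'_s(\omega)$ for $s<t$ implies $Y^\chi_t(\omega)=Y^{\chi'}_t(\omega)$; $Y_0$ is the common value of $Y^\chi_0$. Ask price: $\pi^{\mathrm{ag}}_j(\xi)=\inf\{x\in\mathbb{R}:\exists Y\in\Phi^{\mathrm{ag}}(\xi),\ xe^j=Y_0\}$. Construction (node by node): for $t=0,\ldots,T$ and $\mu\in\Omega_t$, $\mathcal{U}^{\mathrm{ad}\mu}_t=\xi_t(\mu)+\mathcal{Q}^\mu_t$;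 for $\mu\in\Omega_T$, $\mathcal{Z}^{\mathrm{ad}\mu}_T=\mathcal{V}^{\mathrm{ad}\mu}_T=\mathcal{W}^{\mathrm{ad}\mu}_T=\mathcal{U}^{\mathrm{ad}\mu}_T$; backwards for $t=T-1,\ldots,0$ and $\mu\in\Omega_t$: $\mathcal{W}^{\mathrm{ad}\mu}_t=\bigcap_{\nu\in\mathrm{succ}\,\mu}\mathcal{Z}^{\mathrm{ad}\nu}_{t+1}$, $\mathcal{V}^{\mathrm{ad}\mu}_t=\mathcal{W}^{\mathrm{ad}\mu}_t+\mathcal{Q}^\mu_t$, $\mathcal{Z}^{\mathrm{ad}\mu}_t=\mathcal{U}^{\mathrm{ad}\mu}_t\cap\mathcal{V}^{\mathrm{ad}\mu}_t$. $\mathcal{Z}^{\mathrm{ad}}_0$ denotes the set at the single node of $\Omega_0$. Standing assumption: no arbitrage (no $y\in\Phi$ with $y_0=0$, $y_t-y_{t+1}\in\mathcal{K}_t$ for $t<T$ and $y_T-x\in\mathcal{K}_T$ for some nonzero componentwise non-negative $x\in\mathcal{L}_T$). *)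

theory Defs
  imports "HOL-Analysis.Analysis"
begin

(* Conventions:
   - the sample space Omega is the (finite) universe of the type 'w;
   - the filtration is given by its atoms: F t :: 'w set set is the partition Omega_t;
   - assets are indexed by a finite type 'd, vectors in R^d are real^'d, e^j = axis j 1;
   - random variables / processes are functions 'w => ..., nat-indexed in time;
     "x in L_t" is "meas (F t) x" (constant on the atoms of F t). *)

definition meas :: "'w set set \<Rightarrow> ('w \<Rightarrow> 'a) \<Rightarrow> bool" where
  "meas P x \<longleftrightarrow> (\<forall>\<mu>\<in>P. \<forall>\<omega>\<in>\<mu>. \<forall>\<omega>'\<in>\<mu>. x \<omega> = x \<omega>')"

definition Kcone :: "(nat \<Rightarrow> 'w \<Rightarrow> 'd \<Rightarrow> 'd \<Rightarrow> real) \<Rightarrow> nat \<Rightarrow> 'w \<Rightarrow> (real^'d::finite) set" where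
  "Kcone ex t \<omega> = convex_cone hull
     (range (\<lambda>j. axis j 1) \<union> {ex t \<omega> j k *\<^sub>R axis j 1 - axis k 1 | j k. True})"

definition inK :: "(nat \<Rightarrow> 'w \<Rightarrow> 'd \<Rightarrow> 'd \<Rightarrow> real) \<Rightarrow> nat \<Rightarrow> ('w \<Rightarrow> real^'d::finite) \<Rightarrow> bool" where
  "inK ex t x \<longleftrightarrow> (\<forall>\<omega>. x \<omega> \<in> Kcone ex t \<omega>)"

definition Qset :: "(nat \<Rightarrow> 'w set set) \<Rightarrow> nat \<Rightarrow> (nat \<Rightarrow> 'w \<Rightarrow> 'd \<Rightarrow> 'd \<Rightarrow> real) \<Rightarrow> nat
    \<Rightarrow> ('w \<Rightarrow> real^'d::finite) set" where
  "Qset F T ex t = {z. meas (F t) z \<and>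
     (\<exists>y :: nat \<Rightarrow> 'w \<Rightarrow> real^'d.
        (\<forall>s\<in>{t+1..T+1}. meas (F (s - 1)) (y s)) \<and> y (T+1) = (\<lambda>_. 0) \<and>
        inK ex t (\<lambda>\<omega>. z \<omega> - y (t+1) \<omega>) \<and>
        (\<forall>s\<in>{t+1..T}. inK ex s (\<lambda>\<omega>. y s \<omega> - y (Suc s) \<omega>)))}"

definition Qnode :: "(nat \<Rightarrow> 'w set set) \<Rightarrow> nat \<Rightarrow> (nat \<Rightarrow> 'w \<Rightarrow> 'd \<Rightarrow> 'd \<Rightarrow> real) \<Rightarrow> nat
    \<Rightarrow> 'w set \<Rightarrow> (real^'d::finite) set" where
  "Qnode F T ex t \<mu> = {z \<omega> | z \<omega>. z \<in> Qset F T ex t \<and> \<omega> \<in> \<mu>}"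

definition succ :: "(nat \<Rightarrow> 'w set set) \<Rightarrow> nat \<Rightarrow> 'w set \<Rightarrow> 'w set set" where
  "succ F t \<mu> = {\<nu> \<in> F (Suc t). \<nu> \<subseteq> \<mu>}"

definition Unode :: "(nat \<Rightarrow> 'w set set) \<Rightarrow> nat \<Rightarrow> (nat \<Rightarrow> 'w \<Rightarrow> 'd \<Rightarrow> 'd \<Rightarrow> real)
    \<Rightarrow> (nat \<Rightarrow> 'w \<Rightarrow> real^'d::finite) \<Rightarrow> nat \<Rightarrow> 'w set \<Rightarrow> (real^'d) set" where
  "Unode F T ex xi t \<mu> = {xi t \<omega> + q | \<omega> q. \<omega> \<in> \<mu> \<and> q \<in> Qnode F T ex t \<mu>}"

text \<open>Backward construction; Zrec ... k mu is Z^{ad mu}_{T-k}.\<close>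
fun Zrec :: "(nat \<Rightarrow> 'w set set) \<Rightarrow> nat \<Rightarrow> (nat \<Rightarrow> 'w \<Rightarrow> 'd \<Rightarrow> 'd \<Rightarrow> real)
    \<Rightarrow> (nat \<Rightarrow> 'w \<Rightarrow> real^'d::finite) \<Rightarrow> nat \<Rightarrow> 'w set \<Rightarrow> (real^'d) set" where
  "Zrec F T ex xi 0 \<mu> = Unode F T ex xi T \<mu>"
| "Zrec F T ex xi (Suc k) \<mu> =
     Unode F T ex xi (T - Suc k) \<mu> \<inter>
     {w + q | w q. w \<in> (\<Inter>\<nu>\<in>succ F (T - Suc k) \<mu>. Zrec F T ex xi k \<nu>)
                  \<and> q \<in> Qnode F T ex (T - Suc k) \<mu>}"

definition Zad :: "(nat \<Rightarrow> 'w set set) \<Rightarrow> nat \<Rightarrow> (nat \<Rightarrow> 'w \<Rightarrow> 'd \<Rightarrow> 'd \<Rightarrow> real)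
    \<Rightarrow> (nat \<Rightarrow> 'w \<Rightarrow> real^'d::finite) \<Rightarrow> nat \<Rightarrow> 'w set \<Rightarrow> (real^'d) set" where
  "Zad F T ex xi t \<mu> = Zrec F T ex xi (T - t) \<mu>"

definition Zad0 :: "(nat \<Rightarrow> 'w set set) \<Rightarrow> nat \<Rightarrow> (nat \<Rightarrow> 'w \<Rightarrow> 'd \<Rightarrow> 'd \<Rightarrow> real)
    \<Rightarrow> (nat \<Rightarrow> 'w \<Rightarrow> real^'d::finite) \<Rightarrow> (real^'d) set" where
  "Zad0 F T ex xi = Zad F T ex xi 0 UNIV"

definition trading_strategy :: "(nat \<Rightarrow> 'w set set) \<Rightarrow> nat \<Rightarrow> (nat \<Rightarrow> 'w \<Rightarrow> real^'d::finite) \<Rightarrow> bool" where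
  "trading_strategy F T y \<longleftrightarrow> (\<forall>\<omega> \<omega>'. y 0 \<omega> = y 0 \<omega>') \<and>
     (\<forall>t\<in>{1..T+1}. meas (F (t - 1)) (y t)) \<and> y (T+1) = (\<lambda>_. 0)"

definition mixed_stopping_times :: "(nat \<Rightarrow> 'w set set) \<Rightarrow> nat \<Rightarrow> (nat \<Rightarrow> 'w \<Rightarrow> real) set" where
  "mixed_stopping_times F T = {chi. (\<forall>t\<le>T. meas (F t) (chi t)) \<and>
     (\<forall>t\<le>T. \<forall>\<omega>. 0 \<le> chi t \<omega> \<and> chi t \<omega> \<le> 1) \<and> (\<forall>\<omega>. (\<Sum>t\<le>T. chi t \<omega>) = 1)}"

definition Phi_ag :: "(nat \<Rightarrow> 'w set set) \<Rightarrow> nat \<Rightarrow> (nat \<Rightarrow> 'w \<Rightarrow> 'd \<Rightarrow> 'd \<Rightarrow> real)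
    \<Rightarrow> (nat \<Rightarrow> 'w \<Rightarrow> real^'d::finite)
    \<Rightarrow> ((nat \<Rightarrow> 'w \<Rightarrow> real) \<Rightarrow> nat \<Rightarrow> 'w \<Rightarrow> real^'d) set" where
  "Phi_ag F T ex xi = {Y.
     (\<forall>chi\<in>mixed_stopping_times F T. trading_strategy F T (Y chi)) \<and>
     (\<forall>chi\<in>mixed_stopping_times F T. \<forall>t\<le>T.
        inK ex t (\<lambda>\<omega>. Y chi t \<omega> - chi t \<omega> *\<^sub>R xi t \<omega> - Y chi (Suc t) \<omega>)) \<and>
     (\<forall>chi\<in>mixed_stopping_times F T. \<forall>chi'\<in>mixed_stopping_times F T. \<forall>t\<le>T+1. \<forall>\<omega>.
        (\<forall>s<t. chi s \<omega> = chi' s \<omega>) \<longrightarrow> Y chi t \<omega> = Y chi' t \<omega>)}"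

definition initial_value :: "(nat \<Rightarrow> 'w set set) \<Rightarrow> nat
    \<Rightarrow> ((nat \<Rightarrow> 'w \<Rightarrow> real) \<Rightarrow> nat \<Rightarrow> 'w \<Rightarrow> 'v) \<Rightarrow> 'v \<Rightarrow> bool" where
  "initial_value F T Y x \<longleftrightarrow> (\<forall>chi\<in>mixed_stopping_times F T. \<forall>\<omega>. Y chi 0 \<omega> = x)"

definition ask_price :: "(nat \<Rightarrow> 'w set set) \<Rightarrow> nat \<Rightarrow> (nat \<Rightarrow> 'w \<Rightarrow> 'd \<Rightarrow> 'd \<Rightarrow> real)
    \<Rightarrow> (nat \<Rightarrow> 'w \<Rightarrow> real^'d::finite) \<Rightarrow> 'd \<Rightarrow> real" where
  "ask_price F T ex xi j =
     Inf {x. \<exists>Y\<in>Phi_ag F T ex xi. initial_value F T Y (x *\<^sub>R axis j 1)}"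

definition no_arbitrage :: "(nat \<Rightarrow> 'w set set) \<Rightarrow> nat \<Rightarrow> (nat \<Rightarrow> 'w \<Rightarrow> 'd::finite \<Rightarrow> 'd \<Rightarrow> real) \<Rightarrow> bool" where
  "no_arbitrage F T ex \<longleftrightarrow> \<not> (\<exists>(y :: nat \<Rightarrow> 'w \<Rightarrow> real^'d) x.
     trading_strategy F T y \<and> (\<forall>\<omega>. y 0 \<omega> = 0) \<and>
     (\<forall>t<T. inK ex t (\<lambda>\<omega>. y t \<omega> - y (Suc t) \<omega>)) \<and>
     meas (F T) x \<and> inK ex T (\<lambda>\<omega>. y T \<omega> - x \<omega>) \<and>
     (\<forall>\<omega> i. 0 \<le> x \<omega> $ i) \<and> x \<noteq> (\<lambda>_. 0))"

end

theory Submission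
  imports Defs
begin

text \<open>A superhedging strategy \<open>Y\<close>, followed along the pure stopping time ``exercise at \<open>t\<close>'',
  stays in \<open>Z\<^sup>a\<^sup>d\<^sub>t\<close> at every node by backward induction: exercising leaves \<open>Y\<^sub>t - \<xi>\<^sub>t\<close> to be
  liquidated, continuing moves \<open>Y\<^sub>t\<close> by a solvent exchange to a position that lies in
  \<open>Z\<^sup>a\<^sup>d\<^sub>t\<^sub>+\<^sub>1\<close> at every successor node; so \<open>Y\<^sub>0 \<in> Z\<^sup>a\<^sup>d\<^sub>0\<close>. Conversely a point of \<open>Z\<^sup>a\<^sup>d\<^sub>0\<close> unfolds into
  a path \<open>z\<^sub>t \<in> Z\<^sup>a\<^sup>d\<^sub>t\<close> with \<open>z\<^sub>t - \<xi>\<^sub>t\<close> and \<open>z\<^sub>t - z\<^sub>t\<^sub>+\<^sub>1\<close> in \<open>Q\<^sub>t\<close>; superposing, with the weights of a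
  mixed stopping time, the path with deferred liquidations of these differences yields a
  superhedging strategy for every mixed stopping time at once. Finally \<open>Z\<^sup>a\<^sup>d\<^sub>0\<close> is a polyhedron,
  being built from solvency cones by Minkowski sums, translations and intersections; its
  intersection with the axis of asset \<open>j\<close> is nonempty and, by no arbitrage, bounded below, so
  the ask price is attained.\<close>

section \<open>Polyhedra\<close>

lemma polyhedron_affine_vimage:
  fixes L :: "'a::euclidean_space \<Rightarrow> 'b::euclidean_space"
  assumes "linear L" "polyhedron P"
  shows "polyhedron {x. L x + c \<in> P}"
proof -
  obtain H where H: "finite H" "P = \<Inter>H" "\<forall>h\<in>H. \<exists>a b. a \<noteq> 0 \<and> h = {x. a \<bullet> x \<le> b}"
    using assms(2) unfolding polyhedron_def by blast
  have "polyhedron {x. L x + c \<in> h}" if "h \<in> H" for h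
  proof -
    obtain a b where h: "h = {x. a \<bullet> x \<le> b}" using H(3) \<open>h \<in> H\<close> by blast
    have "{x. L x + c \<in> h} = {x. adjoint L a \<bullet> x \<le> b - a \<bullet> c}"
      using adjoint_works[OF assms(1)] by (auto simp: h inner_add_right inner_commute)
    then show ?thesis by (simp add: polyhedron_halfspace_le)
  qed
  moreover have "{x. L x + c \<in> P} = (\<Inter>h\<in>H. {x. L x + c \<in> h})"
    using H(2) by auto
  ultimately show ?thesis using H(1) by (auto intro: polyhedron_Inter)
qed

text \<open>Every nonzero point of the cone is a positive multiple of a point of norm 1, and these lie in
  the polytope cut out of the cone by a large box.\<close>

lemma polyhedral_cone_finitely_generated:
  fixes C :: "'a::euclidean_space set"
  assumes "polyhedron C" "convex_cone C"
  obtains W where "finite W" "C = convex_cone hull W"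
proof -
  obtain e where e: "cball 0 1 \<subseteq> cbox (-e) (e :: 'a)"
    using bounded_subset_cbox_symmetric[OF bounded_cball] by blast
  have "polytope (C \<inter> cbox (-e) e)"
    using assms(1) by (simp add: polytope_eq_bounded_polyhedron bounded_Int)
  then obtain W where W: "finite W" "C \<inter> cbox (-e) e = convex hull W"
    unfolding polytope_def by blast
  have "C = convex_cone hull W"
  proof
    have "W \<subseteq> C" using hull_subset[of W convex] unfolding W(2)[symmetric] by blast
    then show "convex_cone hull W \<subseteq> C" using assms(2) by (rule hull_minimal)
  next
    show "C \<subseteq> convex_cone hull W"
    proof
      fix z assume "z \<in> C"
      show "z \<in> convex_cone hull W"
      proof (cases "z = 0")
        case True then show ?thesis by (simp add: convex_cone_hull_contains_0)
      next
        case False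
        have "(1 / norm z) *\<^sub>R z \<in> C"
          using assms(2) \<open>z \<in> C\<close> by (simp add: convex_cone_iff)
        moreover have "(1 / norm z) *\<^sub>R z \<in> cbox (-e) e"
          using False by (intro subsetD[OF e]) simp
        ultimately have "(1 / norm z) *\<^sub>R z \<in> convex_cone hull W"
          using W(2) convex_hull_subset_convex_cone_hull by blast
        then have "norm z *\<^sub>R ((1 / norm z) *\<^sub>R z) \<in> convex_cone hull W"
          by (rule convex_cone_hull_mul) simp
        then show ?thesis using False by simp
      qed
    qed
  qed
  then show ?thesis using that W(1) by blast
qed

text \<open>Homogenise the defining inequalities \<open>a \<bullet> x \<le> b\<close> to \<open>a \<bullet> x \<le> b r\<close>, \<open>0 \<le> r\<close>.\<close>

lemma polyhedron_homogenization:
  fixes P :: "'a::euclidean_space set"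
  assumes "polyhedron P"
  obtains W :: "('a \<times> real) set" where "finite W" "P = {x. (x, 1) \<in> convex_cone hull W}"
proof -
  obtain H where H: "finite H" "P = \<Inter>H" "\<forall>h\<in>H. \<exists>a b. a \<noteq> 0 \<and> h = {x. a \<bullet> x \<le> b}"
    using assms unfolding polyhedron_def by (elim exE conjE) (rule that)
  have halfspaces: "\<forall>h\<in>H. \<exists>ab. \<forall>x. x \<in> h \<longleftrightarrow> fst ab \<bullet> x \<le> snd ab"
  proof
    fix h assume "h \<in> H"
    then obtain a b where "h = {x. a \<bullet> x \<le> b}" using H(3) by (elim bspec[elim_format] exE conjE)
    then show "\<exists>ab. \<forall>x. x \<in> h \<longleftrightarrow> fst ab \<bullet> x \<le> snd ab" by (intro exI[of _ "(a, b)"]) simp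
  qed
  obtain ab where ab: "\<forall>h\<in>H. \<forall>x. x \<in> h \<longleftrightarrow> fst (ab h) \<bullet> x \<le> snd (ab h)"
    using bchoice[OF halfspaces] by (elim exE) (rule that)
  define C :: "('a \<times> real) set"
    where "C = \<Inter> (insert {z. (0, -1) \<bullet> z \<le> 0} ((\<lambda>h. {z. (fst (ab h), - snd (ab h)) \<bullet> z \<le> 0}) ` H))"
  have "polyhedron C"
    unfolding C_def using H(1) by (intro polyhedron_Inter) (auto simp: polyhedron_halfspace_le)
  moreover have "convex_cone C"
    unfolding C_def by (intro convex_cone_Inter) (auto simp: convex_cone_halfspace_le)
  ultimately obtain W where "finite W" "C = convex_cone hull W"
    by (rule polyhedral_cone_finitely_generated)
  moreover have "x \<in> P \<longleftrightarrow> (x, 1) \<in> C" for x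
    unfolding C_def H(2) by (simp add: ab)
  ultimately show ?thesis using that by blast
qed

lemma polyhedron_linear_image:
  fixes L :: "'a::euclidean_space \<Rightarrow> 'b::euclidean_space"
  assumes "linear L" "polyhedron P"
  shows "polyhedron (L ` P)"
proof -
  obtain W :: "('a \<times> real) set" where W: "finite W" "P = {x. (x, 1) \<in> convex_cone hull W}"
    using polyhedron_homogenization[OF assms(2)] by blast
  define M :: "'a \<times> real \<Rightarrow> 'b \<times> real" where "M z = (L (fst z), snd z)" for z
  have "linear M"
    unfolding M_def using assms(1)
    by (intro bounded_linear.linear bounded_linear_Pair bounded_linear_compose[OF _ bounded_linear_fst]
        bounded_linear_snd) (simp add: linear_conv_bounded_linear)
  have "y \<in> L ` P \<longleftrightarrow> (y, 1) \<in> M ` (convex_cone hull W)" for y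
  proof
    assume "y \<in> L ` P"
    then obtain x where "(x, 1) \<in> convex_cone hull W" "y = L x" using W(2) by blast
    then show "(y, 1) \<in> M ` (convex_cone hull W)" unfolding M_def by force
  next
    assume "(y, 1) \<in> M ` (convex_cone hull W)"
    then obtain x r where "(x, r) \<in> convex_cone hull W" "(y, 1) = (L x, r)" unfolding M_def by auto
    then show "y \<in> L ` P" using W(2) by auto
  qed
  then have "L ` P = {y. (y, 0) + (0, 1) \<in> convex_cone hull (M ` W)}"
    by (auto simp: convex_cone_hull_linear_image[OF \<open>linear M\<close>])
  moreover have "polyhedron {y. (y, 0) + (0, 1) \<in> convex_cone hull (M ` W)}"
    using W(1) by (intro polyhedron_affine_vimage polyhedron_convex_cone_hull) (auto intro: linearI)
  ultimately show ?thesis by simp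
qed

lemma polyhedron_Times:
  fixes S :: "'a::euclidean_space set" and T :: "'b::euclidean_space set"
  assumes "polyhedron S" "polyhedron T"
  shows "polyhedron (S \<times> T)"
proof -
  have "S \<times> T = {z. fst z + 0 \<in> S} \<inter> {z. snd z + 0 \<in> T}" by auto
  then show ?thesis
    using assms bounded_linear_fst bounded_linear_snd
    by (metis bounded_linear.linear polyhedron_Int polyhedron_affine_vimage)
qed

lemma polyhedron_sums:
  fixes S T :: "'a::euclidean_space set"
  assumes "polyhedron S" "polyhedron T"
  shows "polyhedron {x + y | x y. x \<in> S \<and> y \<in> T}"
proof -
  have "{x + y | x y. x \<in> S \<and> y \<in> T} = (\<lambda>z. fst z + snd z) ` (S \<times> T)" by force
  moreover have "linear (\<lambda>z::'a \<times> 'a. fst z + snd z)" by (intro linearI) (auto simp: scaleR_add_right)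
  ultimately show ?thesis using assms by (simp add: polyhedron_Times polyhedron_linear_image)
qed

lemma polyhedron_translation:
  fixes S :: "'a::euclidean_space set"
  assumes "polyhedron S"
  shows "polyhedron {a + x | x. x \<in> S}"
proof -
  have "{a + x | x. x \<in> S} = {x. id x + (- a) \<in> S}" by (force simp: algebra_simps)
  then show ?thesis using polyhedron_affine_vimage[OF linear_id assms] by metis
qed

section \<open>Solvency cones\<close>

lemma convex_cone_Kcone: "convex_cone (Kcone ex t \<omega>)"
  unfolding Kcone_def by (rule convex_cone_convex_cone_hull)

lemma zero_in_Kcone: "0 \<in> Kcone ex t \<omega>"
  by (rule convex_cone_contains_0[OF convex_cone_Kcone])

lemma Kcone_add: "x \<in> Kcone ex t \<omega> \<Longrightarrow> y \<in> Kcone ex t \<omega> \<Longrightarrow> x + y \<in> Kcone ex t \<omega>"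
  by (rule convex_cone_add[OF convex_cone_Kcone])

lemma Kcone_scaleR: "x \<in> Kcone ex t \<omega> \<Longrightarrow> 0 \<le> c \<Longrightarrow> c *\<^sub>R x \<in> Kcone ex t \<omega>"
  by (rule convex_cone_scaleR[OF convex_cone_Kcone])

lemma Kcone_sum:
  "finite A \<Longrightarrow> (\<And>a. a \<in> A \<Longrightarrow> f a \<in> Kcone ex t \<omega>) \<Longrightarrow> sum f A \<in> Kcone ex t \<omega>"
  by (induction A rule: finite_induct) (auto intro: zero_in_Kcone Kcone_add)

lemma axis_in_Kcone: "axis k 1 \<in> Kcone ex t \<omega>"
  unfolding Kcone_def by (rule hull_inc) blast

lemma exchange_in_Kcone: "ex t \<omega> j k *\<^sub>R axis j 1 - axis k 1 \<in> Kcone ex t \<omega>"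
  unfolding Kcone_def by (rule hull_inc) blast

lemma polyhedron_Kcone: "polyhedron (Kcone ex t \<omega>)"
proof -
  have "{ex t \<omega> j k *\<^sub>R axis j 1 - axis k 1 | j k. True} = (\<lambda>(j, k). ex t \<omega> j k *\<^sub>R axis j (1::real) - axis k 1) ` UNIV"
    by auto
  then show ?thesis
    unfolding Kcone_def by (intro polyhedron_convex_cone_hull) simp
qed

text \<open>Each short position \<open>-v\<^sub>k\<close> in asset \<open>k\<close> is covered by \<open>\<bar>v\<^sub>k\<bar> \<pi>\<^sup>j\<^sup>k\<close> units of asset \<open>j\<close>.\<close>

lemma axis_minus_in_Kcone:
  assumes "(\<Sum>k\<in>UNIV. \<bar>v $ k\<bar> * ex t \<omega> j k) \<le> x"
  shows "x *\<^sub>R axis j 1 - v \<in> Kcone ex t \<omega>"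
proof -
  have cover: "(\<bar>v $ k\<bar> * ex t \<omega> j k) *\<^sub>R axis j 1 - v $ k *\<^sub>R axis k 1 \<in> Kcone ex t \<omega>" for k
  proof -
    have "(\<bar>v $ k\<bar> * ex t \<omega> j k) *\<^sub>R axis j 1 - v $ k *\<^sub>R axis k 1
        = \<bar>v $ k\<bar> *\<^sub>R (ex t \<omega> j k *\<^sub>R axis j 1 - axis k 1) + (\<bar>v $ k\<bar> - v $ k) *\<^sub>R axis k 1"
      by (simp add: algebra_simps)
    also have "\<dots> \<in> Kcone ex t \<omega>"
      by (intro Kcone_add Kcone_scaleR exchange_in_Kcone axis_in_Kcone) auto
    finally show ?thesis .
  qed
  have "x *\<^sub>R axis j 1 - v = (\<Sum>k\<in>UNIV. (\<bar>v $ k\<bar> * ex t \<omega> j k) *\<^sub>R axis j 1 - v $ k *\<^sub>R axis k 1)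
      + (x - (\<Sum>k\<in>UNIV. \<bar>v $ k\<bar> * ex t \<omega> j k)) *\<^sub>R axis j 1"
    using basis_expansion[of v]
    by (simp add: sum_subtractf scaleR_sum_left scalar_mult_eq_scaleR algebra_simps)
  also have "\<dots> \<in> Kcone ex t \<omega>"
    using assms by (intro Kcone_add Kcone_sum cover Kcone_scaleR axis_in_Kcone) auto
  finally show ?thesis .
qed

section \<open>The filtration\<close>

lemma meas_const: "meas P (\<lambda>_. c)"
  by (simp add: meas_def)

lemma meas_comp2:
  assumes "meas P x" "meas P y"
  shows "meas P (\<lambda>\<omega>. f (x \<omega>) (y \<omega>))"
  unfolding meas_def
proof (intro ballI)
  fix \<mu> \<omega> \<omega>' assume "\<mu> \<in> P" "\<omega> \<in> \<mu>" "\<omega>' \<in> \<mu>"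
  then have "x \<omega> = x \<omega>'" "y \<omega> = y \<omega>'" using assms unfolding meas_def by blast+
  then show "f (x \<omega>) (y \<omega>) = f (x \<omega>') (y \<omega>')" by simp
qed

lemma meas_comp: "meas P x \<Longrightarrow> meas P (\<lambda>\<omega>. f (x \<omega>))"
  using meas_comp2[of P x x "\<lambda>a b. f a"] by simp

lemma meas_add: "meas P x \<Longrightarrow> meas P y \<Longrightarrow> meas P (\<lambda>\<omega>. x \<omega> + y \<omega>)"
  by (rule meas_comp2)

lemma meas_diff: "meas P x \<Longrightarrow> meas P y \<Longrightarrow> meas P (\<lambda>\<omega>. x \<omega> - y \<omega>)"
  by (rule meas_comp2)

lemma meas_scaleR: "meas P c \<Longrightarrow> meas P x \<Longrightarrow> meas P (\<lambda>\<omega>. c \<omega> *\<^sub>R x \<omega>)"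
  by (rule meas_comp2)

lemma meas_sum:
  assumes "finite A" "\<And>a. a \<in> A \<Longrightarrow> meas P (f a)"
  shows "meas P (\<lambda>\<omega>. \<Sum>a\<in>A. f a \<omega>)"
  using assms by (induction A rule: finite_induct) (auto intro: meas_const meas_add)

locale finite_market =
  fixes F :: "nat \<Rightarrow> ('w::finite) set set" and T :: nat
    and ex :: "nat \<Rightarrow> 'w \<Rightarrow> 'd::finite \<Rightarrow> 'd \<Rightarrow> real"
  assumes partition: "\<And>t. t \<le> T \<Longrightarrow> partition_on UNIV (F t)"
    and refines: "\<And>t \<nu>. t < T \<Longrightarrow> \<nu> \<in> F (Suc t) \<Longrightarrow> \<exists>\<mu>\<in>F t. \<nu> \<subseteq> \<mu>"
    and F0: "F 0 = {UNIV}"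
    and FT: "F T = (\<lambda>\<omega>. {\<omega>}) ` UNIV"
    and pi_meas: "\<And>t j k. t \<le> T \<Longrightarrow> meas (F t) (\<lambda>\<omega>. ex t \<omega> j k)"
begin

definition atom :: "nat \<Rightarrow> 'w \<Rightarrow> 'w set" where
  "atom t \<omega> = (THE \<mu>. \<mu> \<in> F t \<and> \<omega> \<in> \<mu>)"

lemma ex1_atom:
  assumes "t \<le> T"
  shows "\<exists>!\<mu>. \<mu> \<in> F t \<and> \<omega> \<in> \<mu>"
proof -
  have p: "partition_on UNIV (F t)" using partition[OF assms] .
  obtain \<mu> where "\<mu> \<in> F t" "\<omega> \<in> \<mu>" using partition_onD1[OF p] by blast
  moreover have "\<mu>' = \<mu>" if "\<mu>' \<in> F t" "\<omega> \<in> \<mu>'" for \<mu>'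
    using partition_onD2[OF p] that \<open>\<mu> \<in> F t\<close> \<open>\<omega> \<in> \<mu>\<close> unfolding disjoint_def by blast
  ultimately show ?thesis by blast
qed

lemma atom_in_F: "t \<le> T \<Longrightarrow> atom t \<omega> \<in> F t"
  and mem_atom: "t \<le> T \<Longrightarrow> \<omega> \<in> atom t \<omega>"
  unfolding atom_def using theI'[OF ex1_atom] by blast+

lemma atom_eqI: "t \<le> T \<Longrightarrow> \<mu> \<in> F t \<Longrightarrow> \<omega> \<in> \<mu> \<Longrightarrow> atom t \<omega> = \<mu>"
  unfolding atom_def by (rule the1_equality[OF ex1_atom]) auto

lemma atom_eq_iff: "t \<le> T \<Longrightarrow> \<omega>' \<in> atom t \<omega> \<longleftrightarrow> atom t \<omega>' = atom t \<omega>"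
  using atom_eqI[OF _ atom_in_F] mem_atom by metis

lemma F_nonempty: "t \<le> T \<Longrightarrow> \<mu> \<in> F t \<Longrightarrow> \<exists>\<omega>. \<omega> \<in> \<mu>"
  using partition_onD3[OF partition[of t]] by (metis ex_in_conv)

lemma meas_atomD:
  assumes "t \<le> T" "meas (F t) x" "\<omega>' \<in> atom t \<omega>"
  shows "x \<omega>' = x \<omega>"
proof -
  have "\<forall>\<omega>1\<in>atom t \<omega>. \<forall>\<omega>2\<in>atom t \<omega>. x \<omega>1 = x \<omega>2"
    using assms(2) atom_in_F[OF assms(1)] unfolding meas_def by (rule bspec)
  then show ?thesis using mem_atom[OF assms(1)] assms(3) by blast
qed

lemma meas_iff_atom:
  assumes "t \<le> T"
  shows "meas (F t) x \<longleftrightarrow> (\<forall>\<omega> \<omega>'. \<omega>' \<in> atom t \<omega> \<longrightarrow> x \<omega>' = x \<omega>)"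
proof
  assume "meas (F t) x"
  then show "\<forall>\<omega> \<omega>'. \<omega>' \<in> atom t \<omega> \<longrightarrow> x \<omega>' = x \<omega>" using meas_atomD[OF assms] by blast
next
  assume x: "\<forall>\<omega> \<omega>'. \<omega>' \<in> atom t \<omega> \<longrightarrow> x \<omega>' = x \<omega>"
  show "meas (F t) x"
    unfolding meas_def
  proof (intro ballI)
    fix \<mu> \<omega> \<omega>' assume "\<mu> \<in> F t" "\<omega> \<in> \<mu>" "\<omega>' \<in> \<mu>"
    then have "\<omega>' \<in> atom t \<omega>" using atom_eqI[OF assms] by simp
    then show "x \<omega> = x \<omega>'" using x by simp
  qed
qed

lemma atom_mono:
  assumes "s \<le> t" "t \<le> T"
  shows "atom t \<omega> \<subseteq> atom s \<omega>"
  using assms(1)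
proof (induction s rule: inc_induct)
  case (step s)
  then have "s < T" using assms(2) by simp
  then obtain \<mu> where \<mu>: "\<mu> \<in> F s" "atom (Suc s) \<omega> \<subseteq> \<mu>"
    using refines atom_in_F[of "Suc s"] by (metis Suc_leI)
  then have "atom s \<omega> = \<mu>"
    using atom_eqI mem_atom[of "Suc s" \<omega>] \<open>s < T\<close> by (metis Suc_leI less_imp_le subsetD)
  then show ?case using step.IH \<mu>(2) by blast
qed simp

lemma meas_mono: "s \<le> t \<Longrightarrow> t \<le> T \<Longrightarrow> meas (F s) x \<Longrightarrow> meas (F t) x"
  using atom_mono by (simp add: meas_iff_atom subset_iff)

lemma atom_T: "atom T \<omega> = {\<omega>}"
  using atom_eqI[of T "{\<omega>}" \<omega>] FT by auto

lemma atom_0: "atom 0 \<omega> = UNIV"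
  using atom_eqI[of 0 UNIV \<omega>] F0 by auto

lemma mem_F_iff_atom: "t \<le> T \<Longrightarrow> \<mu> \<in> F t \<Longrightarrow> \<omega> \<in> \<mu> \<longleftrightarrow> atom t \<omega> = \<mu>"
  using atom_eqI mem_atom by blast

lemma meas_indicator_F:
  assumes "t \<le> T" "\<mu> \<in> F t"
  shows "meas (F t) (\<lambda>\<omega>. \<omega> \<in> \<mu>)"
  unfolding meas_def
proof (intro ballI)
  fix \<nu> \<omega> \<omega>' assume "\<nu> \<in> F t" "\<omega> \<in> \<nu>" "\<omega>' \<in> \<nu>"
  then have "atom t \<omega> = atom t \<omega>'" using atom_eqI[OF assms(1)] by simp
  then show "(\<omega> \<in> \<mu>) = (\<omega>' \<in> \<mu>)" using mem_F_iff_atom[OF assms] by simp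
qed

lemma Kcone_atom: "t \<le> T \<Longrightarrow> \<omega>' \<in> atom t \<omega> \<Longrightarrow> Kcone ex t \<omega>' = Kcone ex t \<omega>"
  using meas_atomD[OF _ pi_meas] unfolding Kcone_def by presburger

section \<open>Deferred solvency cones\<close>

definition liquidates :: "nat \<Rightarrow> ('w \<Rightarrow> real^'d) \<Rightarrow> (nat \<Rightarrow> 'w \<Rightarrow> real^'d) \<Rightarrow> bool" where
  "liquidates t z y \<longleftrightarrow> (\<forall>s\<in>{t+1..T+1}. meas (F (s - 1)) (y s)) \<and> y (T+1) = (\<lambda>_. 0) \<and>
     inK ex t (\<lambda>\<omega>. z \<omega> - y (t+1) \<omega>) \<and> (\<forall>s\<in>{t+1..T}. inK ex s (\<lambda>\<omega>. y s \<omega> - y (Suc s) \<omega>))"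

lemma Qset_iff: "z \<in> Qset F T ex t \<longleftrightarrow> meas (F t) z \<and> (\<exists>y. liquidates t z y)"
  by (simp add: Qset_def liquidates_def)

lemma Qnode_iff: "v \<in> Qnode F T ex t \<mu> \<longleftrightarrow> (\<exists>z \<omega>. z \<in> Qset F T ex t \<and> \<omega> \<in> \<mu> \<and> v = z \<omega>)"
  by (auto simp: Qnode_def)

lemma Qnode_atomI: "z \<in> Qset F T ex t \<Longrightarrow> t \<le> T \<Longrightarrow> z \<omega> \<in> Qnode F T ex t (atom t \<omega>)"
  using mem_atom by (auto simp: Qnode_iff)

lemma liquidates_add:
  assumes "liquidates t z y" "liquidates t z' y'"
  shows "liquidates t (\<lambda>\<omega>. z \<omega> + z' \<omega>) (\<lambda>s \<omega>. y s \<omega> + y' s \<omega>)"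
  using assms unfolding liquidates_def inK_def
  by (auto simp: add_diff_add intro!: Kcone_add meas_add)

lemma liquidates_scaleR:
  assumes "liquidates t z y" "meas (F t) c" "\<And>\<omega>. 0 \<le> c \<omega>" "t \<le> T"
  shows "liquidates t (\<lambda>\<omega>. c \<omega> *\<^sub>R z \<omega>) (\<lambda>s \<omega>. c \<omega> *\<^sub>R y s \<omega>)"
proof -
  have "meas (F (s - 1)) (\<lambda>\<omega>. c \<omega> *\<^sub>R y s \<omega>)" if "s \<in> {t+1..T+1}" for s
    using that assms(1,4) meas_mono[OF _ _ assms(2), of "s - 1"] unfolding liquidates_def
    by (auto intro: meas_scaleR)
  moreover have "inK ex s (\<lambda>\<omega>. c \<omega> *\<^sub>R x \<omega>)" if "inK ex s x" for s x
    using that assms(3) by (simp add: inK_def Kcone_scaleR)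
  ultimately show ?thesis
    using assms(1) unfolding liquidates_def by (simp add: scaleR_diff_right[symmetric])
qed

lemma liquidates_meas:
  "liquidates s z y \<Longrightarrow> s \<le> t \<Longrightarrow> t \<le> T \<Longrightarrow> meas (F t) (y (Suc t))"
  unfolding liquidates_def by (auto dest: bspec[where x = "Suc t"])

lemma liquidates_tail:
  assumes "liquidates t z y" "t < T"
  shows "liquidates (Suc t) (y (Suc t)) y"
proof -
  have "inK ex (Suc t) (\<lambda>\<omega>. y (Suc t) \<omega> - y (Suc (Suc t)) \<omega>)"
    using assms unfolding liquidates_def by (simp add: Suc_leI)
  then show ?thesis using assms(1) unfolding liquidates_def by simp
qed

lemma zero_in_Qset: "(\<lambda>_. 0) \<in> Qset F T ex t"
  unfolding Qset_iff liquidates_def inK_def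
  by (intro conjI exI[of _ "\<lambda>_ _. 0"]) (auto simp: meas_const zero_in_Kcone)

lemma Qset_add: "z \<in> Qset F T ex t \<Longrightarrow> z' \<in> Qset F T ex t \<Longrightarrow> (\<lambda>\<omega>. z \<omega> + z' \<omega>) \<in> Qset F T ex t"
  unfolding Qset_iff by (blast intro: liquidates_add meas_add)

lemma Qset_scaleR:
  "z \<in> Qset F T ex t \<Longrightarrow> meas (F t) c \<Longrightarrow> (\<And>\<omega>. 0 \<le> c \<omega>) \<Longrightarrow> t \<le> T
    \<Longrightarrow> (\<lambda>\<omega>. c \<omega> *\<^sub>R z \<omega>) \<in> Qset F T ex t"
  unfolding Qset_iff by (blast intro: liquidates_scaleR meas_scaleR)

lemma Qset_sum:
  "finite A \<Longrightarrow> (\<And>a. a \<in> A \<Longrightarrow> f a \<in> Qset F T ex t) \<Longrightarrow> (\<lambda>\<omega>. \<Sum>a\<in>A. f a \<omega>) \<in> Qset F T ex t"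
  by (induction A rule: finite_induct) (auto intro: zero_in_Qset Qset_add)

lemma Kcone_subset_Qset:
  assumes "meas (F t) k" "\<And>\<omega>. k \<omega> \<in> Kcone ex t \<omega>"
  shows "k \<in> Qset F T ex t"
  using assms unfolding Qset_iff liquidates_def inK_def
  by (intro conjI exI[of _ "\<lambda>_ _. 0"]) (auto simp: meas_const zero_in_Kcone)

lemma Kcone_subset_Qnode:
  assumes "t \<le> T" "v \<in> Kcone ex t \<omega>"
  shows "v \<in> Qnode F T ex t (atom t \<omega>)"
proof -
  define k where "k \<omega>' = (if \<omega>' \<in> atom t \<omega> then v else 0)" for \<omega>'
  have "meas (F t) k"
    unfolding k_def by (rule meas_comp[OF meas_indicator_F[OF assms(1) atom_in_F[OF assms(1)]]])
  then have "k \<in> Qset F T ex t"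
    using assms Kcone_atom zero_in_Kcone by (intro Kcone_subset_Qset) (auto simp: k_def)
  moreover have "k \<omega> = v" using mem_atom[OF assms(1)] by (simp add: k_def)
  ultimately show ?thesis using Qnode_atomI[OF _ assms(1)] by metis
qed

lemma Qnode_0_iff: "v \<in> Qnode F T ex 0 UNIV \<longleftrightarrow> (\<lambda>_. v) \<in> Qset F T ex 0"
proof
  assume "v \<in> Qnode F T ex 0 UNIV"
  then obtain z \<omega> where "z \<in> Qset F T ex 0" "v = z \<omega>" by (auto simp: Qnode_iff)
  moreover have "z = (\<lambda>_. z \<omega>)" if "meas (F 0) z"
    using that by (auto simp: meas_iff_atom atom_0)
  ultimately show "(\<lambda>_. v) \<in> Qset F T ex 0" by (metis Qset_iff)
qed (auto simp: Qnode_iff)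

lemma zero_in_Qnode: "t \<le> T \<Longrightarrow> \<mu> \<in> F t \<Longrightarrow> 0 \<in> Qnode F T ex t \<mu>"
  using zero_in_Qset F_nonempty by (fastforce simp: Qnode_iff)

lemma Qnode_witness_on_node:
  assumes t: "t \<le> T" and \<mu>: "\<mu> \<in> F t" and g: "meas (F t) g"
    and \<omega>: "\<omega> \<in> \<mu>" "g \<omega> \<in> Qnode F T ex t \<mu>"
  shows "\<exists>z. z \<in> Qset F T ex t \<and> (\<forall>\<omega>'\<in>\<mu>. z \<omega>' = g \<omega>')"
proof -
  have atom_\<mu>: "\<mu> = atom t \<omega>" using atom_eqI[OF t \<mu> \<omega>(1)] by simp
  obtain z \<omega>1 where z: "z \<in> Qset F T ex t" "\<omega>1 \<in> \<mu>" "g \<omega> = z \<omega>1"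
    using \<omega>(2) by (auto simp: Qnode_iff)
  have "z \<omega>' = g \<omega>'" if "\<omega>' \<in> \<mu>" for \<omega>'
  proof -
    have "meas (F t) z" using z(1) by (simp add: Qset_iff)
    then have "z \<omega>' = z \<omega>1" using meas_atomD[OF t] z(2) that atom_\<mu> by metis
    also have "\<dots> = g \<omega>'" using z(3) meas_atomD[OF t g] that atom_\<mu> by simp
    finally show ?thesis .
  qed
  then show ?thesis using z(1) by blast
qed

text \<open>Patch the witnesses of the individual nodes together with indicator weights.\<close>

lemma Qset_of_Qnode:
  assumes t: "t \<le> T" and g: "meas (F t) g" and gQ: "\<And>\<omega>. g \<omega> \<in> Qnode F T ex t (atom t \<omega>)"
  shows "g \<in> Qset F T ex t"
proof -
  have "\<forall>\<mu>\<in>F t. \<exists>z. z \<in> Qset F T ex t \<and> (\<forall>\<omega>\<in>\<mu>. z \<omega> = g \<omega>)"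
  proof
    fix \<mu> assume \<mu>: "\<mu> \<in> F t"
    obtain \<omega> where "\<omega> \<in> \<mu>" using F_nonempty[OF t \<mu>] by blast
    then show "\<exists>z. z \<in> Qset F T ex t \<and> (\<forall>\<omega>\<in>\<mu>. z \<omega> = g \<omega>)"
      using Qnode_witness_on_node[OF t \<mu> g] gQ atom_eqI[OF t \<mu>] by metis
  qed
  then obtain z where z: "\<forall>\<mu>\<in>F t. z \<mu> \<in> Qset F T ex t \<and> (\<forall>\<omega>\<in>\<mu>. z \<mu> \<omega> = g \<omega>)"
    by (rule bchoice[THEN exE])
  have "(\<lambda>\<omega>. \<Sum>\<mu>\<in>F t. (if \<omega> \<in> \<mu> then 1 else 0) *\<^sub>R z \<mu> \<omega>) \<in> Qset F T ex t"
  proof (intro Qset_sum Qset_scaleR[OF _ _ _ t])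
    fix \<mu> assume "\<mu> \<in> F t"
    then show "z \<mu> \<in> Qset F T ex t" using z by blast
    show "meas (F t) (\<lambda>\<omega>. if \<omega> \<in> \<mu> then 1 else 0 :: real)"
      by (rule meas_comp[OF meas_indicator_F[OF t \<open>\<mu> \<in> F t\<close>]])
  qed auto
  moreover have "(\<Sum>\<mu>\<in>F t. (if \<omega> \<in> \<mu> then 1 else 0) *\<^sub>R z \<mu> \<omega>) = g \<omega>" for \<omega>
  proof -
    have "(\<Sum>\<mu>\<in>F t. (if \<omega> \<in> \<mu> then 1 else 0) *\<^sub>R z \<mu> \<omega>)
        = (\<Sum>\<mu>\<in>F t. if atom t \<omega> = \<mu> then z \<mu> \<omega> else 0)"
      by (intro sum.cong) (auto simp: mem_F_iff_atom[OF t])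
    also have "\<dots> = g \<omega>"
      using z atom_in_F[OF t] mem_atom[OF t] by simp
    finally show ?thesis .
  qed
  ultimately show ?thesis by simp
qed

lemma Qset_prepend:
  assumes t: "t < T" and z: "meas (F t) z" and y: "meas (F t) y" "y \<in> Qset F T ex (Suc t)"
    and k: "inK ex t (\<lambda>\<omega>. z \<omega> - y \<omega>)"
  shows "z \<in> Qset F T ex t"
proof -
  obtain ys where ys: "liquidates (Suc t) y ys" using y(2) by (auto simp: Qset_iff)
  have "liquidates t z (ys(Suc t := y))"
    using ys y(1) t k unfolding liquidates_def by auto
  then show ?thesis using z by (auto simp: Qset_iff)
qed

lemma Qnode_T: "Qnode F T ex T {\<omega>} = Kcone ex T \<omega>"
proof
  show "Qnode F T ex T {\<omega>} \<subseteq> Kcone ex T \<omega>"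
    by (auto simp: Qnode_iff Qset_iff liquidates_def inK_def)
  show "Kcone ex T \<omega> \<subseteq> Qnode F T ex T {\<omega>}"
    using Kcone_subset_Qnode[of T _ \<omega>] by (auto simp: atom_T)
qed

lemma Qnode_decomposition:
  assumes t: "t < T" and \<mu>: "\<mu> \<in> F t" and \<omega>0: "\<omega>0 \<in> \<mu>" and v: "v \<in> Qnode F T ex t \<mu>"
  shows "v \<in> {k + q | k q. k \<in> Kcone ex t \<omega>0 \<and> q \<in> (\<Inter>\<nu>\<in>succ F t \<mu>. Qnode F T ex (Suc t) \<nu>)}"
proof -
  have tT: "t \<le> T" "Suc t \<le> T" using t by auto
  have atom_\<mu>: "atom t \<omega> = \<mu>" if "\<omega> \<in> \<mu>" for \<omega> using atom_eqI[OF tT(1) \<mu> that] .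
  obtain z \<omega> y where z: "meas (F t) z" "liquidates t z y" "\<omega> \<in> \<mu>" "v = z \<omega>"
    using v by (auto simp: Qnode_iff Qset_iff)
  have y_meas: "meas (F t) (y (Suc t))" using liquidates_meas[OF z(2) order_refl tT(1)] .
  then have "y (Suc t) \<in> Qset F T ex (Suc t)"
    using liquidates_tail[OF z(2) t] meas_mono[of t "Suc t"] tT(2) by (auto simp: Qset_iff)
  have "y (Suc t) \<omega> \<in> Qnode F T ex (Suc t) \<nu>" if \<nu>: "\<nu> \<in> succ F t \<mu>" for \<nu>
  proof -
    obtain \<omega>' where \<omega>': "\<omega>' \<in> \<nu>" "\<nu> \<subseteq> \<mu>"
      using \<nu> F_nonempty[OF tT(2)] by (auto simp: succ_def)
    then have "y (Suc t) \<omega>' = y (Suc t) \<omega>"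
      using meas_atomD[OF tT(1) y_meas] atom_\<mu>[OF z(3)] by blast
    then show ?thesis
      unfolding Qnode_iff using \<open>y (Suc t) \<in> Qset F T ex (Suc t)\<close> \<omega>'(1) by metis
  qed
  moreover have "v - y (Suc t) \<omega> \<in> Kcone ex t \<omega>0"
  proof -
    have "v - y (Suc t) \<omega> \<in> Kcone ex t \<omega>" using z(2,4) unfolding liquidates_def inK_def by simp
    moreover have "\<omega> \<in> atom t \<omega>0" using z(3) atom_\<mu>[OF \<omega>0] by simp
    ultimately show ?thesis using Kcone_atom[OF tT(1)] by simp
  qed
  moreover have "v = (v - y (Suc t) \<omega>) + y (Suc t) \<omega>" by simp
  ultimately show ?thesis by blast
qed

text \<open>Exchange \<open>k\<close> at the node \<open>\<mu>\<close> and defer \<open>q\<close>, which is liquidable at every successor node.\<close>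

lemma Kcone_plus_Qnode_Suc_in_Qnode:
  assumes t: "t < T" and \<mu>: "\<mu> \<in> F t" and \<omega>0: "\<omega>0 \<in> \<mu>"
    and k: "k \<in> Kcone ex t \<omega>0" and q: "q \<in> (\<Inter>\<nu>\<in>succ F t \<mu>. Qnode F T ex (Suc t) \<nu>)"
  shows "k + q \<in> Qnode F T ex t \<mu>"
proof -
  have tT: "t \<le> T" "Suc t \<le> T" using t by auto
  define y where "y \<omega> = (if \<omega> \<in> \<mu> then q else 0)" for \<omega>
  define z where "z \<omega> = (if \<omega> \<in> \<mu> then k + q else 0)" for \<omega>
  have ind_meas: "meas (F t) (\<lambda>\<omega>. \<omega> \<in> \<mu>)" using meas_indicator_F[OF tT(1) \<mu>] .
  have y_meas: "meas (F t) y" and z_meas: "meas (F t) z"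
    unfolding y_def z_def by (auto intro: meas_comp[OF ind_meas])
  have "y \<in> Qset F T ex (Suc t)"
  proof (rule Qset_of_Qnode[OF tT(2) meas_mono[OF le_SucI[OF order_refl] tT(2) y_meas]])
    fix \<omega>
    show "y \<omega> \<in> Qnode F T ex (Suc t) (atom (Suc t) \<omega>)"
    proof (cases "\<omega> \<in> \<mu>")
      case True
      then have "atom (Suc t) \<omega> \<in> succ F t \<mu>"
        using atom_in_F[OF tT(2)] atom_mono[of t "Suc t"] tT atom_eqI[OF tT(1) \<mu>] by (auto simp: succ_def)
      then show ?thesis using q True by (auto simp: y_def)
    qed (simp add: y_def zero_in_Qnode atom_in_F tT)
  qed
  moreover have "inK ex t (\<lambda>\<omega>. z \<omega> - y \<omega>)"
    using k Kcone_atom[OF tT(1)] atom_eqI[OF tT(1) \<mu>] \<omega>0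
    by (auto simp: inK_def z_def y_def zero_in_Kcone)
  ultimately have "z \<in> Qset F T ex t" using Qset_prepend[OF t z_meas y_meas] by blast
  moreover have "z \<omega>0 = k + q" using \<omega>0 by (simp add: z_def)
  ultimately show ?thesis using \<omega>0 unfolding Qnode_iff by metis
qed

lemma Qnode_Suc:
  assumes "t < T" "\<mu> \<in> F t" "\<omega>0 \<in> \<mu>"
  shows "Qnode F T ex t \<mu> = {k + q | k q. k \<in> Kcone ex t \<omega>0 \<and> q \<in> (\<Inter>\<nu>\<in>succ F t \<mu>. Qnode F T ex (Suc t) \<nu>)}"
  using Qnode_decomposition[OF assms] Kcone_plus_Qnode_Suc_in_Qnode[OF assms] by blast

lemma polyhedron_Qnode: "t \<le> T \<Longrightarrow> \<mu> \<in> F t \<Longrightarrow> polyhedron (Qnode F T ex t \<mu>)"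
proof (induction t arbitrary: \<mu> rule: inc_induct)
  case base
  then show ?case using FT by (auto simp: Qnode_T polyhedron_Kcone)
next
  case (step t)
  then have "t \<le> T" by simp
  obtain \<omega>0 where \<omega>0: "\<omega>0 \<in> \<mu>" using F_nonempty[OF \<open>t \<le> T\<close> step.prems] by blast
  have "polyhedron (\<Inter>\<nu>\<in>succ F t \<mu>. Qnode F T ex (Suc t) \<nu>)"
    using step.IH by (intro polyhedron_Inter) (auto simp: succ_def)
  then show ?case
    unfolding Qnode_Suc[OF step.hyps(2) step.prems \<omega>0] by (rule polyhedron_sums[OF polyhedron_Kcone])
qed

lemma Qset_add_Kcone:
  assumes "z \<in> Qset F T ex t" "meas (F t) k" "\<And>\<omega>. k \<omega> \<in> Kcone ex t \<omega>"
  shows "(\<lambda>\<omega>. z \<omega> + k \<omega>) \<in> Qset F T ex t"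
  using assms(1) Kcone_subset_Qset[OF assms(2,3)] by (rule Qset_add)

lemma liquidation_strategy:
  assumes y: "liquidates 0 (\<lambda>_. v) y"
  obtains y' where "trading_strategy F T y'" "\<forall>\<omega>. y' 0 \<omega> = 0"
    "\<forall>t<T. inK ex t (\<lambda>\<omega>. y' t \<omega> - y' (Suc t) \<omega>)" "inK ex T (\<lambda>\<omega>. y' T \<omega> + v)"
proof -
  have y_meas: "meas (F (s - 1)) (y s)" if "s \<in> {1..T+1}" for s
    using y that unfolding liquidates_def by auto
  have y_first: "inK ex 0 (\<lambda>\<omega>. v - y 1 \<omega>)" and y_last: "y (Suc T) = (\<lambda>_. 0)"
    using y unfolding liquidates_def by auto
  have y_step: "inK ex s (\<lambda>\<omega>. y s \<omega> - y (Suc s) \<omega>)" if "s \<in> {1..T}" for s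
    using y that unfolding liquidates_def by auto
  define y' :: "nat \<Rightarrow> 'w \<Rightarrow> real^'d" where
    "y' t = (if t = 0 \<or> T < t then (\<lambda>_. 0) else (\<lambda>\<omega>. y t \<omega> - v))" for t
  have "trading_strategy F T y'"
    unfolding trading_strategy_def
  proof (intro conjI ballI allI)
    fix t assume "t \<in> {1..T+1}"
    then show "meas (F (t - 1)) (y' t)"
      using y_meas[of t] by (auto simp: y'_def meas_const intro: meas_comp)
  qed (auto simp: y'_def)
  moreover have "\<forall>t<T. inK ex t (\<lambda>\<omega>. y' t \<omega> - y' (Suc t) \<omega>)"
  proof (intro allI impI)
    fix t assume "t < T"
    then show "inK ex t (\<lambda>\<omega>. y' t \<omega> - y' (Suc t) \<omega>)"
      using y_first y_step[of t] by (cases "t = 0") (simp_all add: y'_def algebra_simps)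
  qed
  moreover have "inK ex T (\<lambda>\<omega>. y' T \<omega> + v)"
    using y_first y_last y_step[of T] by (cases "T = 0") (simp_all add: y'_def)
  ultimately show ?thesis using that by (simp add: y'_def)
qed

text \<open>Under no arbitrage a short position in a single asset cannot be liquidated, for the
  liquidating strategy would be an arbitrage.\<close>

lemma no_arbitrage_axis_Qset0:
  assumes NA: "no_arbitrage F T ex" and z: "(\<lambda>_. c *\<^sub>R axis j 1) \<in> Qset F T ex 0"
  shows "0 \<le> c"
proof (rule ccontr)
  assume "\<not> 0 \<le> c"
  define a where "a = - c *\<^sub>R axis j (1::real)"
  obtain y' where "trading_strategy F T y'" "\<forall>\<omega>. y' 0 \<omega> = 0"
    "\<forall>t<T. inK ex t (\<lambda>\<omega>. y' t \<omega> - y' (Suc t) \<omega>)" "inK ex T (\<lambda>\<omega>. y' T \<omega> - a)"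
    using z liquidation_strategy by (auto simp: Qset_iff a_def)
  moreover have "(\<lambda>_. a) \<noteq> (\<lambda>_. 0 :: real^'d)" "\<forall>\<omega>::'w. \<forall>i. 0 \<le> a $ i"
    using \<open>\<not> 0 \<le> c\<close> by (auto simp: a_def axis_def fun_eq_iff vec_eq_iff)
  ultimately show False
    using NA meas_const[of "F T" a] unfolding no_arbitrage_def by blast
qed

end

section \<open>The sets \<open>Z\<^sup>a\<^sup>d\<close>\<close>

locale american_option = finite_market F T ex
  for F :: "nat \<Rightarrow> ('w::finite) set set" and T :: nat and ex :: "nat \<Rightarrow> 'w \<Rightarrow> 'd::finite \<Rightarrow> 'd \<Rightarrow> real" +
  fixes xi :: "nat \<Rightarrow> 'w \<Rightarrow> real^'d"
  assumes xi_adapted: "\<And>t. t \<le> T \<Longrightarrow> meas (F t) (xi t)"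
begin

abbreviation "Z \<equiv> Zad F T ex xi"

lemma Unode_eq:
  assumes "t \<le> T" "\<mu> \<in> F t" "\<omega>0 \<in> \<mu>"
  shows "Unode F T ex xi t \<mu> = {xi t \<omega>0 + q | q. q \<in> Qnode F T ex t \<mu>}"
proof -
  have xi_eq: "xi t \<omega> = xi t \<omega>0" if "\<omega> \<in> \<mu>" for \<omega>
    using meas_atomD[OF assms(1) xi_adapted[OF assms(1)]] atom_eqI[OF assms(1,2)] assms(3) that by metis
  show ?thesis
    unfolding Unode_def
  proof (intro set_eqI iffI)
    fix x assume "x \<in> {xi t \<omega> + q |\<omega> q. \<omega> \<in> \<mu> \<and> q \<in> Qnode F T ex t \<mu>}"
    then show "x \<in> {xi t \<omega>0 + q |q. q \<in> Qnode F T ex t \<mu>}" using xi_eq by auto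
  next
    fix x assume "x \<in> {xi t \<omega>0 + q |q. q \<in> Qnode F T ex t \<mu>}"
    then show "x \<in> {xi t \<omega> + q |\<omega> q. \<omega> \<in> \<mu> \<and> q \<in> Qnode F T ex t \<mu>}" using assms(3) by blast
  qed
qed

lemma Unode_atom_iff:
  "t \<le> T \<Longrightarrow> v \<in> Unode F T ex xi t (atom t \<omega>) \<longleftrightarrow> v - xi t \<omega> \<in> Qnode F T ex t (atom t \<omega>)"
  using Unode_eq[OF _ atom_in_F mem_atom] by (force simp: algebra_simps)

lemma Zad_T: "Z T \<mu> = Unode F T ex xi T \<mu>"
  by (simp add: Zad_def)

lemma Zad_Suc:
  assumes "t < T"
  shows "Z t \<mu> = Unode F T ex xi t \<mu> \<inter>
     {w + q | w q. w \<in> (\<Inter>\<nu>\<in>succ F t \<mu>. Z (Suc t) \<nu>) \<and> q \<in> Qnode F T ex t \<mu>}"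
proof -
  have "T - t = Suc (T - Suc t)" "T - Suc (T - Suc t) = t" using assms by auto
  then show ?thesis by (simp add: Zad_def)
qed

lemma Zad_subset_Unode: "t \<le> T \<Longrightarrow> Z t \<mu> \<subseteq> Unode F T ex xi t \<mu>"
  by (cases "t = T") (auto simp: Zad_T Zad_Suc)

lemma polyhedron_Zad: "t \<le> T \<Longrightarrow> \<mu> \<in> F t \<Longrightarrow> polyhedron (Z t \<mu>)"
proof (induction t arbitrary: \<mu> rule: inc_induct)
  case base
  obtain \<omega> where \<omega>: "\<omega> \<in> \<mu>" using F_nonempty[OF order_refl base] by blast
  show ?case
    unfolding Zad_T Unode_eq[OF order_refl base \<omega>]
    by (intro polyhedron_translation polyhedron_Qnode[OF order_refl base])
next
  case (step t)
  then have "t \<le> T" by simp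
  obtain \<omega>0 where \<omega>0: "\<omega>0 \<in> \<mu>" using F_nonempty[OF \<open>t \<le> T\<close> step.prems] by blast
  have "polyhedron (\<Inter>\<nu>\<in>succ F t \<mu>. Z (Suc t) \<nu>)"
    using step.IH by (intro polyhedron_Inter) (auto simp: succ_def)
  then show ?case
    unfolding Zad_Suc[OF step.hyps(2)] Unode_eq[OF \<open>t \<le> T\<close> step.prems \<omega>0]
    using polyhedron_Qnode[OF \<open>t \<le> T\<close> step.prems]
    by (intro polyhedron_Int polyhedron_translation polyhedron_sums)
qed

lemma closed_Zad0: "closed (Zad0 F T ex xi)"
  unfolding Zad0_def using polyhedron_Zad[of 0 UNIV] F0 by (simp add: polyhedron_imp_closed)

definition payoff_bound :: "'d \<Rightarrow> real" where
  "payoff_bound j = (\<Sum>s\<le>T. \<Sum>\<omega>\<in>UNIV. \<bar>\<Sum>k\<in>UNIV. \<bar>xi s \<omega> $ k\<bar> * ex s \<omega> j k\<bar>)"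

lemma payoff_bound_ge:
  assumes "s \<le> T"
  shows "(\<Sum>k\<in>UNIV. \<bar>xi s \<omega> $ k\<bar> * ex s \<omega> j k) \<le> payoff_bound j"
proof -
  have "(\<Sum>k\<in>UNIV. \<bar>xi s \<omega> $ k\<bar> * ex s \<omega> j k) \<le> (\<Sum>\<omega>\<in>UNIV. \<bar>\<Sum>k\<in>UNIV. \<bar>xi s \<omega> $ k\<bar> * ex s \<omega> j k\<bar>)"
    by (rule order_trans[OF abs_ge_self member_le_sum[of \<omega>]]) auto
  also have "\<dots> \<le> payoff_bound j"
    unfolding payoff_bound_def using assms by (intro member_le_sum) (auto intro: sum_nonneg)
  finally show ?thesis .
qed

lemma axis_in_Unode:
  assumes "payoff_bound j \<le> x" "t \<le> T" "\<mu> \<in> F t"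
  shows "x *\<^sub>R axis j 1 \<in> Unode F T ex xi t \<mu>"
proof -
  obtain \<omega> where \<omega>: "\<omega> \<in> \<mu>" using F_nonempty assms(2,3) by blast
  have "x *\<^sub>R axis j 1 - xi t \<omega> \<in> Kcone ex t \<omega>"
    using payoff_bound_ge[OF assms(2), of \<omega> j] assms(1) by (intro axis_minus_in_Kcone) simp
  then show ?thesis
    using Unode_atom_iff[OF assms(2)] Kcone_subset_Qnode[OF assms(2)] atom_eqI[OF assms(2,3) \<omega>] by metis
qed

lemma axis_in_Zad:
  assumes "payoff_bound j \<le> x"
  shows "t \<le> T \<Longrightarrow> \<mu> \<in> F t \<Longrightarrow> x *\<^sub>R axis j 1 \<in> Z t \<mu>"
proof (induction t arbitrary: \<mu> rule: inc_induct)
  case base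
  then show ?case using axis_in_Unode[OF assms] by (simp add: Zad_T)
next
  case (step t)
  have "x *\<^sub>R axis j 1 \<in> (\<Inter>\<nu>\<in>succ F t \<mu>. Z (Suc t) \<nu>)"
    using step.IH by (auto simp: succ_def)
  moreover have "0 \<in> Qnode F T ex t \<mu>" using zero_in_Qnode step by simp
  ultimately show ?case
    using axis_in_Unode[OF assms] step by (force simp: Zad_Suc)
qed

lemma axis_in_Zad0: "payoff_bound j \<le> x \<Longrightarrow> x *\<^sub>R axis j 1 \<in> Zad0 F T ex xi"
  using axis_in_Zad[of j x 0 UNIV] F0 by (simp add: Zad0_def)

lemma axis_in_Zad0_imp_ge:
  assumes NA: "no_arbitrage F T ex" and x: "x *\<^sub>R axis j 1 \<in> Zad0 F T ex xi"
  shows "- (\<Sum>k\<in>UNIV. \<bar>xi 0 \<omega> $ k\<bar> * ex 0 \<omega> j k) \<le> x"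
proof -
  define M where "M = (\<Sum>k\<in>UNIV. \<bar>xi 0 \<omega> $ k\<bar> * ex 0 \<omega> j k)"
  have "x *\<^sub>R axis j 1 - xi 0 \<omega> \<in> Qnode F T ex 0 UNIV"
    using x Zad_subset_Unode[of 0] Unode_atom_iff[of 0] by (auto simp: Zad0_def atom_0)
  then have "(\<lambda>_. x *\<^sub>R axis j 1 - xi 0 \<omega>) \<in> Qset F T ex 0"
    by (simp add: Qnode_0_iff)
  moreover have "M *\<^sub>R axis j 1 - - xi 0 \<omega> \<in> Kcone ex 0 \<omega>'" for \<omega>'
  proof -
    have "M *\<^sub>R axis j 1 - - xi 0 \<omega> \<in> Kcone ex 0 \<omega>" by (intro axis_minus_in_Kcone) (simp add: M_def)
    then show ?thesis using Kcone_atom[of 0 \<omega>' \<omega>] by (simp add: atom_0)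
  qed
  ultimately have "(\<lambda>_. (x *\<^sub>R axis j 1 - xi 0 \<omega>) + (M *\<^sub>R axis j 1 - - xi 0 \<omega>)) \<in> Qset F T ex 0"
    using Qset_add_Kcone[OF _ meas_const] by blast
  then have "(\<lambda>_. (x + M) *\<^sub>R axis j 1) \<in> Qset F T ex 0"
    by (simp add: scaleR_add_left)
  then show ?thesis using no_arbitrage_axis_Qset0[OF NA] by (fastforce simp: M_def)
qed

section \<open>Superhedging strategies and \<open>Z\<^sup>a\<^sup>d\<^sub>0\<close>\<close>

definition stopping_at :: "nat \<Rightarrow> nat \<Rightarrow> 'w \<Rightarrow> real" where
  "stopping_at t s \<omega> = (if s = t then 1 else 0)"

lemma stopping_at_in_mixed_stopping_times: "t \<le> T \<Longrightarrow> stopping_at t \<in> mixed_stopping_times F T"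
  by (auto simp: mixed_stopping_times_def stopping_at_def meas_def)

lemma Phi_agD:
  assumes "Y \<in> Phi_ag F T ex xi" "chi \<in> mixed_stopping_times F T"
  shows "trading_strategy F T (Y chi)"
    and "t \<le> T \<Longrightarrow> inK ex t (\<lambda>\<omega>. Y chi t \<omega> - chi t \<omega> *\<^sub>R xi t \<omega> - Y chi (Suc t) \<omega>)"
    and "chi' \<in> mixed_stopping_times F T \<Longrightarrow> t \<le> T + 1 \<Longrightarrow> \<forall>s<t. chi s \<omega> = chi' s \<omega>
      \<Longrightarrow> Y chi t \<omega> = Y chi' t \<omega>"
  using assms unfolding Phi_ag_def by blast+

lemma trading_strategy_meas:
  assumes "trading_strategy F T y" "t \<le> T"
  shows "meas (F t) (y t)" and "meas (F t) (y (Suc t))"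
proof -
  have next_meas: "meas (F s) (y (Suc s))" if "s \<le> T" for s
    using assms(1) that unfolding trading_strategy_def by (auto dest: bspec[where x = "Suc s"])
  then show "meas (F t) (y (Suc t))" using assms(2) .
  show "meas (F t) (y t)"
  proof (cases t)
    case 0
    then show ?thesis using assms(1) by (simp add: trading_strategy_def meas_def)
  next
    case (Suc s)
    then show ?thesis using next_meas[of s] meas_mono[of s t] assms(2) by simp
  qed
qed

text \<open>Exercising the option at time \<open>t\<close> means paying \<open>\<xi>\<^sub>t\<close> out of \<open>Y\<^sub>t\<close> and liquidating the rest.\<close>

lemma Phi_ag_stopped_in_Unode:
  assumes Y: "Y \<in> Phi_ag F T ex xi" and t: "t \<le> T"
  shows "Y (stopping_at t) t \<omega> \<in> Unode F T ex xi t (atom t \<omega>)"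
proof -
  let ?y = "Y (stopping_at t)"
  note ts = Phi_agD(1)[OF Y stopping_at_in_mixed_stopping_times[OF t]]
    and sf = Phi_agD(2)[OF Y stopping_at_in_mixed_stopping_times[OF t]]
  have "inK ex t (\<lambda>\<omega>. (?y t \<omega> - xi t \<omega>) - ?y (t + 1) \<omega>)"
    using sf[OF t] by (simp add: stopping_at_def)
  moreover have "inK ex s (\<lambda>\<omega>. ?y s \<omega> - ?y (Suc s) \<omega>)" if "s \<in> {t+1..T}" for s
    using sf[of s] that by (simp add: stopping_at_def)
  ultimately have "liquidates t (\<lambda>\<omega>. ?y t \<omega> - xi t \<omega>) ?y"
    using ts unfolding trading_strategy_def liquidates_def by auto
  then have "(\<lambda>\<omega>. ?y t \<omega> - xi t \<omega>) \<in> Qset F T ex t"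
    using trading_strategy_meas(1)[OF ts t] xi_adapted[OF t] by (auto simp: Qset_iff intro: meas_diff)
  then show ?thesis
    using Qnode_atomI[OF _ t] Unode_atom_iff[OF t] by blast
qed

lemma Phi_ag_stopped_in_Zad:
  assumes Y: "Y \<in> Phi_ag F T ex xi"
  shows "t \<le> T \<Longrightarrow> Y (stopping_at t) t \<omega> \<in> Z t (atom t \<omega>)"
proof (induction t arbitrary: \<omega> rule: inc_induct)
  case base
  then show ?case using Phi_ag_stopped_in_Unode[OF Y] by (simp add: Zad_T)
next
  case (step t)
  let ?y = "Y (stopping_at (Suc t))"
  have tT: "t \<le> T" "Suc t \<le> T" using step by auto
  note mst = stopping_at_in_mixed_stopping_times
  have same: "Y (stopping_at t) t \<omega> = ?y t \<omega>"
    using tT by (intro Phi_agD(3)[OF Y mst mst]) (auto simp: stopping_at_def)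
  have y_meas: "meas (F t) (?y (Suc t))"
    using trading_strategy_meas(2)[OF Phi_agD(1)[OF Y mst[OF tT(2)]] tT(1)] .
  have "?y (Suc t) \<omega> \<in> Z (Suc t) \<nu>" if \<nu>: "\<nu> \<in> succ F t (atom t \<omega>)" for \<nu>
  proof -
    obtain \<omega>' where \<omega>': "\<omega>' \<in> \<nu>" "\<nu> \<in> F (Suc t)" "\<nu> \<subseteq> atom t \<omega>"
      using \<nu> F_nonempty[OF tT(2)] by (auto simp: succ_def)
    then have "atom (Suc t) \<omega>' = \<nu>" "?y (Suc t) \<omega>' = ?y (Suc t) \<omega>"
      using atom_eqI[OF tT(2)] meas_atomD[OF tT(1) y_meas] by auto
    then show ?thesis using step.IH[of \<omega>'] by simp
  qed
  moreover have "?y t \<omega> - ?y (Suc t) \<omega> \<in> Qnode F T ex t (atom t \<omega>)"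
    using Phi_agD(2)[OF Y mst[OF tT(2)] tT(1)] Kcone_subset_Qnode[OF tT(1)]
    by (simp add: inK_def stopping_at_def)
  moreover have "Y (stopping_at t) t \<omega> = ?y (Suc t) \<omega> + (?y t \<omega> - ?y (Suc t) \<omega>)"
    using same by simp
  ultimately have "Y (stopping_at t) t \<omega> \<in>
      {w + q | w q. w \<in> (\<Inter>\<nu>\<in>succ F t (atom t \<omega>). Z (Suc t) \<nu>) \<and> q \<in> Qnode F T ex t (atom t \<omega>)}"
    by blast
  then show ?case
    using Phi_ag_stopped_in_Unode[OF Y tT(1)] Zad_Suc[OF step.hyps(2)] by simp
qed

lemma Phi_ag_initial_value_in_Zad0:
  assumes "Y \<in> Phi_ag F T ex xi" "initial_value F T Y x"
  shows "x \<in> Zad0 F T ex xi"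
  using Phi_ag_stopped_in_Zad[OF assms(1), of 0] assms(2) stopping_at_in_mixed_stopping_times[of 0]
  by (simp add: Zad0_def atom_0 initial_value_def)

text \<open>The choice is possible as long as the path stays in \<open>Z\<^sup>a\<^sup>d\<close>, by \<open>Zad_Suc\<close>.\<close>

primrec Zpath :: "real^'d \<Rightarrow> nat \<Rightarrow> 'w \<Rightarrow> real^'d" where
  "Zpath z0 0 = (\<lambda>_. z0)"
| "Zpath z0 (Suc t) = (\<lambda>\<omega>. SOME w. w \<in> (\<Inter>\<nu>\<in>succ F t (atom t \<omega>). Z (Suc t) \<nu>) \<and>
                         Zpath z0 t \<omega> - w \<in> Qnode F T ex t (atom t \<omega>))"

lemma Zpath_Suc_meas:
  assumes "t \<le> T" "meas (F t) (Zpath z0 t)"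
  shows "meas (F t) (Zpath z0 (Suc t))"
proof -
  have "Zpath z0 (Suc t) \<omega>' = Zpath z0 (Suc t) \<omega>" if "\<omega>' \<in> atom t \<omega>" for \<omega> \<omega>'
  proof -
    have "atom t \<omega>' = atom t \<omega>" using atom_eq_iff[OF assms(1)] that by blast
    moreover have "Zpath z0 t \<omega>' = Zpath z0 t \<omega>" by (rule meas_atomD[OF assms that])
    ultimately show ?thesis by (simp only: Zpath.simps)
  qed
  then show ?thesis using assms(1) by (simp add: meas_iff_atom)
qed

lemma Zpath_meas: "t \<le> T \<Longrightarrow> meas (F t) (Zpath z0 t)"
proof (induction t)
  case (Suc t)
  then have "meas (F t) (Zpath z0 (Suc t))" by (intro Zpath_Suc_meas) simp_all
  then show ?case using meas_mono[of t "Suc t"] Suc.prems by simp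
qed (simp add: meas_const)

lemma Zpath_Suc:
  assumes "t < T" "Zpath z0 t \<omega> \<in> Z t (atom t \<omega>)"
  shows "Zpath z0 (Suc t) \<omega> \<in> (\<Inter>\<nu>\<in>succ F t (atom t \<omega>). Z (Suc t) \<nu>)"
    and "Zpath z0 t \<omega> - Zpath z0 (Suc t) \<omega> \<in> Qnode F T ex t (atom t \<omega>)"
proof -
  have "Zpath z0 t \<omega> \<in> {w + q | w q. w \<in> (\<Inter>\<nu>\<in>succ F t (atom t \<omega>). Z (Suc t) \<nu>) \<and>
      q \<in> Qnode F T ex t (atom t \<omega>)}"
    using assms(2) unfolding Zad_Suc[OF assms(1)] by (rule IntD2)
  then obtain w q where "Zpath z0 t \<omega> = w + q" "w \<in> (\<Inter>\<nu>\<in>succ F t (atom t \<omega>). Z (Suc t) \<nu>)"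
      "q \<in> Qnode F T ex t (atom t \<omega>)"
    by blast
  then have "\<exists>w. w \<in> (\<Inter>\<nu>\<in>succ F t (atom t \<omega>). Z (Suc t) \<nu>) \<and>
      Zpath z0 t \<omega> - w \<in> Qnode F T ex t (atom t \<omega>)"
    by (metis add_diff_cancel_left')
  then have "Zpath z0 (Suc t) \<omega> \<in> (\<Inter>\<nu>\<in>succ F t (atom t \<omega>). Z (Suc t) \<nu>) \<and>
      Zpath z0 t \<omega> - Zpath z0 (Suc t) \<omega> \<in> Qnode F T ex t (atom t \<omega>)"
    unfolding Zpath.simps by (rule someI_ex)
  then show "Zpath z0 (Suc t) \<omega> \<in> (\<Inter>\<nu>\<in>succ F t (atom t \<omega>). Z (Suc t) \<nu>)"
    and "Zpath z0 t \<omega> - Zpath z0 (Suc t) \<omega> \<in> Qnode F T ex t (atom t \<omega>)"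
    by blast+
qed

context
  fixes z0 assumes z0: "z0 \<in> Zad0 F T ex xi"
begin

lemma Zpath_in_Zad: "t \<le> T \<Longrightarrow> Zpath z0 t \<omega> \<in> Z t (atom t \<omega>)"
proof (induction t arbitrary: \<omega>)
  case 0
  then show ?case using z0 by (simp add: Zad0_def atom_0)
next
  case (Suc t)
  then have "t < T" by simp
  have "atom (Suc t) \<omega> \<in> succ F t (atom t \<omega>)"
    using atom_in_F[OF Suc.prems] atom_mono[of t "Suc t"] Suc.prems by (auto simp: succ_def)
  then show ?case using Zpath_Suc(1)[OF \<open>t < T\<close> Suc.IH[OF less_imp_le[OF \<open>t < T\<close>]]] by blast
qed

lemma Zpath_payoff_Qset:
  assumes t: "t \<le> T"
  shows "(\<lambda>\<omega>. Zpath z0 t \<omega> - xi t \<omega>) \<in> Qset F T ex t"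
proof (rule Qset_of_Qnode[OF t])
  show "meas (F t) (\<lambda>\<omega>. Zpath z0 t \<omega> - xi t \<omega>)"
    using Zpath_meas[OF t] xi_adapted[OF t] by (rule meas_diff)
  show "Zpath z0 t \<omega> - xi t \<omega> \<in> Qnode F T ex t (atom t \<omega>)" for \<omega>
    using Zpath_in_Zad[OF t] Zad_subset_Unode[OF t] Unode_atom_iff[OF t] by blast
qed

lemma Zpath_step_Qset:
  assumes t: "t < T"
  shows "(\<lambda>\<omega>. Zpath z0 t \<omega> - Zpath z0 (Suc t) \<omega>) \<in> Qset F T ex t"
proof (rule Qset_of_Qnode)
  show "t \<le> T" using t by simp
  show "meas (F t) (\<lambda>\<omega>. Zpath z0 t \<omega> - Zpath z0 (Suc t) \<omega>)"
  proof -
    have "meas (F t) (Zpath z0 t)" "meas (F t) (Zpath z0 (Suc t))"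
      using Zpath_meas Zpath_Suc_meas t by simp_all
    then show ?thesis by (rule meas_diff)
  qed
  show "Zpath z0 t \<omega> - Zpath z0 (Suc t) \<omega> \<in> Qnode F T ex t (atom t \<omega>)" for \<omega>
    using Zpath_Suc(2)[OF t Zpath_in_Zad] t by simp
qed

end

end

definition remaining :: "(nat \<Rightarrow> 'w \<Rightarrow> real) \<Rightarrow> nat \<Rightarrow> 'w \<Rightarrow> real" where
  "remaining chi t \<omega> = 1 - (\<Sum>s<t. chi s \<omega>)"

text \<open>Along a mixed stopping time \<open>\<chi>\<close> the position at time \<open>t\<close> splits into the mass
  \<open>remaining \<chi> t\<close> not yet exercised, which holds \<open>z\<^sub>t\<close>, and for each \<open>s < t\<close> the mass \<open>\<chi>\<^sub>s\<close>
  exercised at \<open>s\<close>, which runs the liquidation \<open>U\<^sup>s\<close> of \<open>z\<^sub>s - \<xi>\<^sub>s\<close>, and the mass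
  \<open>remaining \<chi> (s + 1)\<close> that continued at \<open>s\<close>, which runs the liquidation \<open>V\<^sup>s\<close> of \<open>z\<^sub>s - z\<^sub>s\<^sub>+\<^sub>1\<close>.\<close>

definition superposition ::
  "(nat \<Rightarrow> 'w \<Rightarrow> 'a::real_vector) \<Rightarrow> (nat \<Rightarrow> nat \<Rightarrow> 'w \<Rightarrow> 'a) \<Rightarrow> (nat \<Rightarrow> nat \<Rightarrow> 'w \<Rightarrow> 'a)
    \<Rightarrow> (nat \<Rightarrow> 'w \<Rightarrow> real) \<Rightarrow> nat \<Rightarrow> 'w \<Rightarrow> 'a" where
  "superposition z U V chi t \<omega> = remaining chi t \<omega> *\<^sub>R z t \<omega> +
     (\<Sum>s<t. chi s \<omega> *\<^sub>R U s t \<omega> + remaining chi (Suc s) \<omega> *\<^sub>R V s t \<omega>)"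

lemma superposition_step:
  "superposition z U V chi t \<omega> - chi t \<omega> *\<^sub>R x - superposition z U V chi (Suc t) \<omega> =
     chi t \<omega> *\<^sub>R (z t \<omega> - x - U t (Suc t) \<omega>) +
     remaining chi (Suc t) \<omega> *\<^sub>R (z t \<omega> - z (Suc t) \<omega> - V t (Suc t) \<omega>) +
     (\<Sum>s<t. chi s \<omega> *\<^sub>R (U s t \<omega> - U s (Suc t) \<omega>) + remaining chi (Suc s) \<omega> *\<^sub>R (V s t \<omega> - V s (Suc t) \<omega>))"
proof -
  have R: "remaining chi (Suc t) \<omega> = remaining chi t \<omega> - chi t \<omega>"
    by (simp add: remaining_def)
  show ?thesis
    unfolding superposition_def sum.lessThan_Suc R
    by (simp add: sum_subtractf scaleR_diff_right scaleR_diff_left algebra_simps)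
qed

lemma superposition_0: "superposition z U V chi 0 \<omega> = z 0 \<omega>"
  by (simp add: superposition_def remaining_def)

context american_option
begin

lemma remaining_nonneg:
  assumes "chi \<in> mixed_stopping_times F T" "u \<le> Suc T"
  shows "0 \<le> remaining chi u \<omega>"
proof -
  have "(\<Sum>s<u. chi s \<omega>) \<le> (\<Sum>s\<le>T. chi s \<omega>)"
    using assms by (intro sum_mono2) (auto simp: mixed_stopping_times_def)
  then show ?thesis using assms(1) by (simp add: remaining_def mixed_stopping_times_def)
qed

lemma remaining_Suc_T: "chi \<in> mixed_stopping_times F T \<Longrightarrow> remaining chi (Suc T) \<omega> = 0"
  by (simp add: remaining_def mixed_stopping_times_def lessThan_Suc_atMost)

lemma remaining_meas:
  assumes "chi \<in> mixed_stopping_times F T" "u \<le> Suc t" "t \<le> T"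
  shows "meas (F t) (remaining chi u)"
proof -
  have "meas (F s) (chi s)" if "s < u" for s
    using assms that by (simp add: mixed_stopping_times_def)
  then have "meas (F t) (chi s)" if "s < u" for s
    using that assms(2,3) meas_mono[of s t "chi s"] by simp
  then have "meas (F t) (\<lambda>\<omega>. \<Sum>s<u. chi s \<omega>)" by (intro meas_sum) auto
  then show ?thesis unfolding remaining_def by (rule meas_comp)
qed

context
  fixes z :: "nat \<Rightarrow> 'w \<Rightarrow> real^'d" and U V :: "nat \<Rightarrow> nat \<Rightarrow> 'w \<Rightarrow> real^'d"
  assumes z_meas: "\<And>t. t < T \<Longrightarrow> meas (F t) (z (Suc t))"
    and U: "\<And>s. s \<le> T \<Longrightarrow> liquidates s (\<lambda>\<omega>. z s \<omega> - xi s \<omega>) (U s)"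
    and V: "\<And>s. s < T \<Longrightarrow> liquidates s (\<lambda>\<omega>. z s \<omega> - z (Suc s) \<omega>) (V s)"
begin

lemma superposition_self_financing:
  assumes chi: "chi \<in> mixed_stopping_times F T" and t: "t \<le> T"
  shows "inK ex t (\<lambda>\<omega>. superposition z U V chi t \<omega> - chi t \<omega> *\<^sub>R xi t \<omega> - superposition z U V chi (Suc t) \<omega>)"
  unfolding inK_def superposition_step
proof
  fix \<omega>
  have chi_nonneg: "0 \<le> chi s \<omega>" if "s \<le> T" for s
    using chi that by (simp add: mixed_stopping_times_def)
  have "chi t \<omega> *\<^sub>R (z t \<omega> - xi t \<omega> - U t (Suc t) \<omega>) \<in> Kcone ex t \<omega>"
    using U[OF t] chi_nonneg[OF t] by (simp add: liquidates_def inK_def Kcone_scaleR)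
  moreover have "remaining chi (Suc t) \<omega> *\<^sub>R (z t \<omega> - z (Suc t) \<omega> - V t (Suc t) \<omega>) \<in> Kcone ex t \<omega>"
  proof (cases "t < T")
    case True
    then show ?thesis using V[OF True] remaining_nonneg[OF chi, of "Suc t"]
      by (simp add: liquidates_def inK_def Kcone_scaleR)
  qed (use t remaining_Suc_T[OF chi] zero_in_Kcone in auto)
  moreover have "(\<Sum>s<t. chi s \<omega> *\<^sub>R (U s t \<omega> - U s (Suc t) \<omega>) +
      remaining chi (Suc s) \<omega> *\<^sub>R (V s t \<omega> - V s (Suc t) \<omega>)) \<in> Kcone ex t \<omega>"
  proof (intro Kcone_sum Kcone_add Kcone_scaleR)
    fix s assume "s \<in> {..<t}"
    then have s: "s \<le> T" "s < T" "t \<in> {s+1..T}" using t by auto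
    show "U s t \<omega> - U s (Suc t) \<omega> \<in> Kcone ex t \<omega>" "V s t \<omega> - V s (Suc t) \<omega> \<in> Kcone ex t \<omega>"
      using U[OF s(1)] V[OF s(2)] s(3) by (auto simp: liquidates_def inK_def)
    show "0 \<le> chi s \<omega>" "0 \<le> remaining chi (Suc s) \<omega>"
      using chi_nonneg remaining_nonneg[OF chi] s by auto
  qed simp
  ultimately show "chi t \<omega> *\<^sub>R (z t \<omega> - xi t \<omega> - U t (Suc t) \<omega>) +
      remaining chi (Suc t) \<omega> *\<^sub>R (z t \<omega> - z (Suc t) \<omega> - V t (Suc t) \<omega>) +
      (\<Sum>s<t. chi s \<omega> *\<^sub>R (U s t \<omega> - U s (Suc t) \<omega>) + remaining chi (Suc s) \<omega> *\<^sub>R (V s t \<omega> - V s (Suc t) \<omega>))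
      \<in> Kcone ex t \<omega>"
    by (intro Kcone_add)
qed

lemma superposition_terminal:
  assumes "chi \<in> mixed_stopping_times F T"
  shows "superposition z U V chi (Suc T) = (\<lambda>_. 0)"
proof -
  have "U s (Suc T) = (\<lambda>_. 0)" if "s \<le> T" for s using U[OF that] by (simp add: liquidates_def)
  moreover have "V s (Suc T) = (\<lambda>_. 0)" if "s < T" for s using V[OF that] by (simp add: liquidates_def)
  ultimately show ?thesis
    using remaining_Suc_T[OF assms]
    by (auto simp: superposition_def less_Suc_eq intro!: sum.neutral)
qed

lemma superposition_meas:
  assumes chi: "chi \<in> mixed_stopping_times F T" and t: "t < T"
  shows "meas (F t) (superposition z U V chi (Suc t))"
proof -
  have "meas (F t) (\<lambda>\<omega>. chi s \<omega> *\<^sub>R U s (Suc t) \<omega> + remaining chi (Suc s) \<omega> *\<^sub>R V s (Suc t) \<omega>)"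
    if "s < Suc t" for s
  proof -
    have "meas (F t) (chi s)"
      using chi that t meas_mono[of s t "chi s"] by (simp add: mixed_stopping_times_def)
    moreover have "meas (F t) (U s (Suc t))" "meas (F t) (V s (Suc t))"
      using liquidates_meas[OF U[of s]] liquidates_meas[OF V[of s]] that t by simp_all
    moreover have "meas (F t) (remaining chi (Suc s))"
      using remaining_meas[OF chi, of "Suc s" t] that t by simp
    ultimately show ?thesis by (intro meas_add meas_scaleR)
  qed
  then have "meas (F t) (\<lambda>\<omega>. \<Sum>s<Suc t. chi s \<omega> *\<^sub>R U s (Suc t) \<omega> + remaining chi (Suc s) \<omega> *\<^sub>R V s (Suc t) \<omega>)"
    by (intro meas_sum) simp_all
  moreover have "meas (F t) (\<lambda>\<omega>. remaining chi (Suc t) \<omega> *\<^sub>R z (Suc t) \<omega>)"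
    using t by (intro meas_scaleR remaining_meas[OF chi] z_meas) simp_all
  ultimately show ?thesis
    unfolding superposition_def by (intro meas_add)
qed

lemma superposition_in_Phi_ag:
  assumes z0: "\<And>\<omega>. z 0 \<omega> = z0"
  shows "superposition z U V \<in> Phi_ag F T ex xi" "initial_value F T (superposition z U V) z0"
proof -
  have "trading_strategy F T (superposition z U V chi)" if "chi \<in> mixed_stopping_times F T" for chi
  proof -
    have "meas (F (t - 1)) (superposition z U V chi t)" if "t \<in> {1..T+1}" for t
      using that superposition_meas[OF \<open>chi \<in> _\<close>, of "t - 1"] superposition_terminal[OF \<open>chi \<in> _\<close>]
      by (cases "t = Suc T") (auto simp: meas_const)
    then show ?thesis
      using superposition_terminal[OF that] by (simp add: trading_strategy_def superposition_0 z0)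
  qed
  moreover have "superposition z U V chi t \<omega> = superposition z U V chi' t \<omega>"
    if "\<forall>s<t. chi s \<omega> = chi' s \<omega>" for chi chi' t \<omega>
    using that by (simp add: superposition_def remaining_def)
  ultimately show "superposition z U V \<in> Phi_ag F T ex xi"
    using superposition_self_financing by (simp add: Phi_ag_def)
  show "initial_value F T (superposition z U V) z0"
    by (simp add: initial_value_def superposition_0 z0)
qed

end

lemma Zad0_subset_initial_values:
  assumes "z0 \<in> Zad0 F T ex xi"
  shows "\<exists>Y\<in>Phi_ag F T ex xi. initial_value F T Y z0"
proof -
  have U_ex: "\<forall>s. \<exists>y. s \<le> T \<longrightarrow> liquidates s (\<lambda>\<omega>. Zpath z0 s \<omega> - xi s \<omega>) y"
    using Zpath_payoff_Qset[OF assms] by (auto simp: Qset_iff)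
  obtain U where U: "\<forall>s. s \<le> T \<longrightarrow> liquidates s (\<lambda>\<omega>. Zpath z0 s \<omega> - xi s \<omega>) (U s)"
    using choice[OF U_ex] by (elim exE) (rule that)
  have V_ex: "\<forall>s. \<exists>y. s < T \<longrightarrow> liquidates s (\<lambda>\<omega>. Zpath z0 s \<omega> - Zpath z0 (Suc s) \<omega>) y"
    using Zpath_step_Qset[OF assms] by (auto simp: Qset_iff)
  obtain V where V: "\<forall>s. s < T \<longrightarrow> liquidates s (\<lambda>\<omega>. Zpath z0 s \<omega> - Zpath z0 (Suc s) \<omega>) (V s)"
    using choice[OF V_ex] by (elim exE) (rule that)
  show ?thesis
    using superposition_in_Phi_ag[of "Zpath z0" U V z0] U V Zpath_Suc_meas[OF _ Zpath_meas]
    by (auto intro: less_imp_le)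
qed

lemma initial_values_eq_Zad0:
  "Zad0 F T ex xi = {x. \<exists>Y\<in>Phi_ag F T ex xi. initial_value F T Y x}"
  using Zad0_subset_initial_values Phi_ag_initial_value_in_Zad0 by blast

lemma ask_price_attained:
  assumes NA: "no_arbitrage F T ex"
  shows "ask_price F T ex xi j *\<^sub>R axis j 1 \<in> Zad0 F T ex xi"
    and "x *\<^sub>R axis j 1 \<in> Zad0 F T ex xi \<Longrightarrow> ask_price F T ex xi j \<le> x"
proof -
  define S where "S = {x::real. x *\<^sub>R axis j 1 \<in> Zad0 F T ex xi}"
  have price: "ask_price F T ex xi j = Inf S"
    by (simp add: ask_price_def S_def initial_values_eq_Zad0)
  have "S \<noteq> {}" using axis_in_Zad0[of j "payoff_bound j"] by (auto simp: S_def)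
  moreover have "bdd_below S"
    using axis_in_Zad0_imp_ge[OF NA] by (auto simp: S_def bdd_below_def)
  moreover have "closed S"
  proof -
    have "S = (\<lambda>x. x *\<^sub>R axis j 1) -` Zad0 F T ex xi" by (auto simp: S_def)
    then show ?thesis by (simp add: continuous_closed_vimage[OF closed_Zad0])
  qed
  ultimately have "Inf S \<in> S" by (rule closed_contains_Inf)
  then show "ask_price F T ex xi j *\<^sub>R axis j 1 \<in> Zad0 F T ex xi"
    by (simp add: price S_def)
  show "x *\<^sub>R axis j 1 \<in> Zad0 F T ex xi \<Longrightarrow> ask_price F T ex xi j \<le> x"
    using cInf_lower[OF _ \<open>bdd_below S\<close>] by (simp add: price S_def)
qed

end

theorem theorem4p6:
  fixes F :: "nat \<Rightarrow> ('w::finite) set set"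
    and T :: nat
    and P :: "'w \<Rightarrow> real"
    and ex :: "nat \<Rightarrow> 'w \<Rightarrow> 'd::finite \<Rightarrow> 'd \<Rightarrow> real"
    and xi :: "nat \<Rightarrow> 'w \<Rightarrow> real^'d"
  assumes prob_pos: "\<And>\<omega>. P \<omega> > 0"
    and prob_sum: "(\<Sum>\<omega>\<in>UNIV. P \<omega>) = 1"
    and partition: "\<And>t. t \<le> T \<Longrightarrow> partition_on UNIV (F t)"
    and refines: "\<And>t \<nu>. t < T \<Longrightarrow> \<nu> \<in> F (Suc t) \<Longrightarrow> \<exists>\<mu>\<in>F t. \<nu> \<subseteq> \<mu>"
    and F0: "F 0 = {UNIV}"
    and FT: "F T = (\<lambda>\<omega>. {\<omega>}) ` UNIV"
    and pi_meas: "\<And>t j k. t \<le> T \<Longrightarrow> meas (F t) (\<lambda>\<omega>. ex t \<omega> j k)"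
    and pi_pos: "\<And>t \<omega> j k. t \<le> T \<Longrightarrow> ex t \<omega> j k > 0"
    and pi_diag: "\<And>t \<omega> j. t \<le> T \<Longrightarrow> ex t \<omega> j j = 1"
    and xi_adapted: "\<And>t. t \<le> T \<Longrightarrow> meas (F t) (xi t)"
    and NA: "no_arbitrage F T ex"
  shows "Zad0 F T ex xi = {x. \<exists>Y\<in>Phi_ag F T ex xi. initial_value F T Y x}
         \<and> (\<forall>j. ask_price F T ex xi j *\<^sub>R axis j 1 \<in> Zad0 F T ex xi
                \<and> (\<forall>x. x *\<^sub>R axis j 1 \<in> Zad0 F T ex xi \<longrightarrow> ask_price F T ex xi j \<le> x)
                \<and> (\<exists>Y\<in>Phi_ag F T ex xi. initial_value F T Y (ask_price F T ex xi j *\<^sub>R axis j 1)))"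
proof -
  interpret american_option F T ex xi
    using partition refines F0 FT pi_meas xi_adapted by unfold_locales
  show ?thesis
    using initial_values_eq_Zad0 ask_price_attained[OF NA] by blast
qed

end
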